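(* Let $D_1\subset\mathbb{R}^2$ be an open disc centered at the origin, let $\boldsymbol{\gamma}_1,\dots,\boldsymbol{\gamma}_m$ be distinct unit vectors in $\mathbb{R}^2$ and $c_1,\dots,c_m$ nonzero reals, and suppose the set $\mathcal{Z}_1\cup\mathcal{Z}_2$ is finite. Then for every vector field $\mathbf{f}$ on $\mathbb{R}^2$ with components in $C^2_c(D_1)$, the function $(\boldsymbol{\psi},s)\mapsto Q(\boldsymbol{\psi})\frac{d}{ds}\mathcal{R}(\mathcal{S}\mathbf{f})(\boldsymbol{\psi},s)$, defined for $\boldsymbol{\psi}\in\mathbb{S}^1\setminus(\mathcal{Z}_1\cup\mathcal{Z}_2)$, extends continuously to all of $\mathbb{S}^1\times\mathbb{R}$ and equals $\mathcal{R}\mathbf{f}$ there; consequently $\mathbf{f}(\mathbf{x})$ is recovered at every $\mathbf{x}\in D_1$ by applying the inverse Radon transform $\mathcal{R}^{-1}$ (componentwise) to this function. In particular, $\mathbf{f}$ is uniquely determined by $\mathcal{S}\mathbf{f}$.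
   Context: For $\mathbf{x}=(x_1,x_2)$ set $\mathbf{x}^\perp=(-x_2,x_1)$. For a unit vector $\boldsymbol{\gamma}$, $\mathcal{X}_{\boldsymbol{\gamma}}h(\mathbf{x})=\int_0^\infty h(\mathbf{x}+t\boldsymbol{\gamma})\,dt$. The vector-valued star transform is $\mathcal{S}\mathbf{f}=\sum_{i=1}^m c_i\,\mathcal{X}_{\boldsymbol{\gamma}_i}\begin{bmatrix}\mathbf{f}\cdot\boldsymbol{\gamma}_i\\ \mathbf{f}\cdot\boldsymbol{\gamma}_i^\perp\end{bmatrix}$. $\mathcal{R}h(\boldsymbol{\psi},s)=\int_{\mathbb{R}}h(s\boldsymbol{\psi}+t\boldsymbol{\psi}^\perp)\,dt$ is the Radon transform, applied componentwise to vector-valued functions. $\mathcal{Z}_1=\bigcup_{i}\{\boldsymbol{\psi}\in\mathbb{S}^1:\boldsymbol{\psi}\cdot\boldsymbol{\gamma}_i=0\}$; for $\boldsymbol{\psi}\in\mathbb{S}^1\setminus\mathcal{Z}_1$, $\boldsymbol{\gamma}(\boldsymbol{\psi})=-\sum_{i}\frac{c_i\boldsymbol{\gamma}_i}{\boldsymbol{\psi}\cdot\boldsymbol{\gamma}_i}$; $\mathcal{Z}_2=\{\boldsymbol{\psi}\in\mathbb{S}^1\setminus\mathcal{Z}_1:\boldsymbol{\gamma}(\boldsymbol{\psi})=0\}$; and for $\boldsymbol{\psi}\notin\mathcal{Z}_1\cup\mathcal{Z}_2$, $Q(\boldsymbol{\psi})$ is the inverse of the $2\times2$ matrix with rows $\boldsymbol{\gamma}(\boldsymbol{\psi})$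 and $\boldsymbol{\gamma}(\boldsymbol{\psi})^\perp$. *)

theory Defs
  imports "HOL-Analysis.Analysis"
begin

definition perp :: "real^2 \<Rightarrow> real^2" where
  "perp x = vector [- (x$2), x$1]"

definition divbeam :: "real^2 \<Rightarrow> (real^2 \<Rightarrow> real) \<Rightarrow> real^2 \<Rightarrow> real" where
  "divbeam g h x = integral {0..} (\<lambda>t. h (x + t *\<^sub>R g))"

definition star_transform ::
  "nat \<Rightarrow> (nat \<Rightarrow> real) \<Rightarrow> (nat \<Rightarrow> real^2) \<Rightarrow> (real^2 \<Rightarrow> real^2) \<Rightarrow> real^2 \<Rightarrow> real^2" where
  "star_transform m c gam f x =
     (\<Sum>i<m. c i *\<^sub>R vector [divbeam (gam i) (\<lambda>y. f y \<bullet> gam i) x,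
                               divbeam (gam i) (\<lambda>y. f y \<bullet> perp (gam i)) x])"

definition radon :: "(real^2 \<Rightarrow> 'b::euclidean_space) \<Rightarrow> real^2 \<Rightarrow> real \<Rightarrow> 'b" where
  "radon h psi s = integral UNIV (\<lambda>t. h (s *\<^sub>R psi + t *\<^sub>R perp psi))"

definition Z1 :: "nat \<Rightarrow> (nat \<Rightarrow> real^2) \<Rightarrow> (real^2) set" where
  "Z1 m gam = (\<Union>i<m. {psi \<in> sphere 0 1. psi \<bullet> gam i = 0})"

definition gamma_psi :: "nat \<Rightarrow> (nat \<Rightarrow> real) \<Rightarrow> (nat \<Rightarrow> real^2) \<Rightarrow> real^2 \<Rightarrow> real^2" where
  "gamma_psi m c gam psi = - (\<Sum>i<m. (c i / (psi \<bullet> gam i)) *\<^sub>R gam i)"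

definition Z2 :: "nat \<Rightarrow> (nat \<Rightarrow> real) \<Rightarrow> (nat \<Rightarrow> real^2) \<Rightarrow> (real^2) set" where
  "Z2 m c gam = {psi \<in> sphere 0 1 - Z1 m gam. gamma_psi m c gam psi = 0}"

definition Qmat :: "nat \<Rightarrow> (nat \<Rightarrow> real) \<Rightarrow> (nat \<Rightarrow> real^2) \<Rightarrow> real^2 \<Rightarrow> real^2^2" where
  "Qmat m c gam psi =
     matrix_inv (vector [gamma_psi m c gam psi, perp (gamma_psi m c gam psi)] :: real^2^2)"

definition C2 :: "(real^2 \<Rightarrow> real) \<Rightarrow> bool" where
  "C2 h \<longleftrightarrow> (\<exists>(D :: real^2 \<Rightarrow> ((real^2) \<Rightarrow>\<^sub>L real))
                 (D2 :: real^2 \<Rightarrow> ((real^2) \<Rightarrow>\<^sub>L ((real^2) \<Rightarrow>\<^sub>L real))).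
      (\<forall>x. (h has_derivative blinfun_apply (D x)) (at x)) \<and>
      (\<forall>x. (D has_derivative blinfun_apply (D2 x)) (at x)) \<and>
      continuous_on UNIV D2)"

definition C2c_field :: "(real^2) set \<Rightarrow> (real^2 \<Rightarrow> real^2) \<Rightarrow> bool" where
  "C2c_field U f \<longleftrightarrow> (\<forall>j. C2 (\<lambda>x. f x $ j)) \<and>
      compact (closure {x. f x \<noteq> 0}) \<and> closure {x. f x \<noteq> 0} \<subseteq> U"

definition hilbert :: "(real \<Rightarrow> 'b::euclidean_space) \<Rightarrow> real \<Rightarrow> 'b" where
  "hilbert g t = (1 / pi) *\<^sub>R
     Lim (at_right 0) (\<lambda>\<epsilon>. integral {s. \<epsilon> \<le> \<bar>t - s\<bar>} (\<lambda>s. (1 / (t - s)) *\<^sub>R g s))"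

definition radon_inverse :: "(real^2 \<Rightarrow> real \<Rightarrow> 'b::euclidean_space) \<Rightarrow> real^2 \<Rightarrow> 'b" where
  "radon_inverse G x = (1 / (4 * pi)) *\<^sub>R
     integral {0..2*pi} (\<lambda>\<theta>. let psi = vector [cos \<theta>, sin \<theta>] :: real^2 in
        hilbert (\<lambda>s. vector_derivative (\<lambda>u. G psi u) (at s)) (x \<bullet> psi))"

end

(*
  Radon transform of one branch: integrating the divergent beam X_gamma h along the
  line {s psi + t psi_perp} and exchanging the two integrals gives
  R(X_gamma h)(psi, s) = int_0^oo Rh(psi, s + tau (psi . gamma)) dtau, so that
  d/ds R(X_gamma h)(psi, s) = - Rh(psi, s) / (psi . gamma) whenever psi . gamma <> 0.
  Applied to the components f . gamma_i and f . gamma_i_perp and summed over the branches,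
  d/ds R(Sf)(psi, s) = M(psi) Rf(psi, s), where M(psi) has the rows gamma(psi) and
  gamma(psi)_perp and is invertible exactly when gamma(psi) <> 0.  Hence Q(psi) d/ds R(Sf)
  equals Rf off Z1 u Z2, and Rf, being continuous on S^1 x R, is the required extension.
  Since Z1 u Z2 is finite and the circle has no isolated points, two fields with the same
  star transform have the same Radon transform, so uniqueness follows from inversion.

  The inversion formula is proved directly for C^2 fields with compact support.  At a
  point x and direction theta, the Hilbert transform of d/ds Rf(theta, .) at x . theta is
  1/pi times the integral over s > 0 of the symmetric difference quotient
  (d/ds Rf(theta, x . theta - s) - d/ds Rf(theta, x . theta + s)) / s, which is bounded since
  f is C^2.  Restricted to the cone |t| <= s tan b of the frame (theta, theta_perp) at x,
  the substitution t = s tan beta turns this into integrals of derivatives along the rays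
  from x in the directions theta + beta and theta + pi - beta; the fundamental theorem of
  calculus along these rays gives 2 f(x) plus terms that cancel after integration over
  theta.  Letting b tend to pi/2, the cone exhausts the plane and the angular integral of
  the Hilbert transforms becomes 4 pi^2 f(x).
*)
theory Submission
  imports Defs
begin

section \<open>Planar geometry\<close>

definition polar_dir :: "real \<Rightarrow> real^2" where
  "polar_dir a = vector [cos a, sin a]"

lemma perp_nth [simp]: "perp x $ 1 = - (x$2)" "perp x $ 2 = x$1"
  by (simp_all add: perp_def)

lemma polar_dir_nth [simp]: "polar_dir a $ 1 = cos a" "polar_dir a $ 2 = sin a"
  by (simp_all add: polar_dir_def)

lemma vec2_eq_iff: "(x::'a^2) = y \<longleftrightarrow> x$1 = y$1 \<and> x$2 = y$2"
  by (simp add: vec_eq_iff forall_2)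

lemma inner_vec2: "(x::real^2) \<bullet> y = x$1 * y$1 + x$2 * y$2"
  by (simp add: inner_vec_def sum_2)

lemma norm_vec2: "norm (x::real^2) = sqrt ((x$1)\<^sup>2 + (x$2)\<^sup>2)"
  by (simp add: norm_eq_sqrt_inner inner_vec2 power2_eq_square)

lemma vec2_eq_axis_sum: "(x::real^2) = x$1 *\<^sub>R axis 1 1 + x$2 *\<^sub>R axis 2 1"
  by (simp add: vec2_eq_iff axis_def)

lemma vector2_eq_axis_sum: "(vector [a, b] :: real^2) = a *\<^sub>R axis 1 1 + b *\<^sub>R axis 2 1"
  by (simp add: vec2_eq_iff axis_def)

lemma norm_polar_dir [simp]: "norm (polar_dir a) = 1"
  by (simp add: norm_vec2)

lemma polar_dir_periodic: "polar_dir (a + 2*pi) = polar_dir a"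
  by (simp add: polar_dir_def)

lemma polar_dir_add: "polar_dir (a + b) = cos b *\<^sub>R polar_dir a + sin b *\<^sub>R perp (polar_dir a)"
  by (simp add: vec2_eq_iff cos_add sin_add algebra_simps)

lemma continuous_on_polar_dir [continuous_intros]:
  fixes a :: "'a::t2_space \<Rightarrow> real"
  shows "continuous_on S a \<Longrightarrow> continuous_on S (\<lambda>z. polar_dir (a z))"
  unfolding polar_dir_def vector2_eq_axis_sum
  by (auto intro!: continuous_intros)

lemma inner_perp_self [simp]: "perp x \<bullet> x = 0" "x \<bullet> perp x = 0"
  by (simp_all add: inner_vec2)

lemma inner_perp_perp [simp]: "perp x \<bullet> perp y = x \<bullet> y"
  by (simp add: inner_vec2)

lemma norm_perp [simp]: "norm (perp x) = norm x"
  by (simp add: norm_eq_sqrt_inner)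

lemma perp_add: "perp (x + y) = perp x + perp y"
  by (simp add: vec2_eq_iff)

lemma perp_scaleR: "perp (c *\<^sub>R x) = c *\<^sub>R perp x"
  by (simp add: vec2_eq_iff)

lemma perp_minus: "perp (- x) = - perp x"
  by (simp add: vec2_eq_iff)

lemma perp_sum: "perp (sum g S) = (\<Sum>i\<in>S. perp (g i))"
  by (induction S rule: infinite_finite_induct) (auto simp: perp_add vec2_eq_iff)

lemma bounded_linear_perp: "bounded_linear perp"
proof -
  have "linear perp"
    by (rule linearI) (simp_all add: perp_add perp_scaleR)
  then show ?thesis
    by (simp add: linear_conv_bounded_linear)
qed

lemma continuous_on_perp [continuous_intros]:
  "continuous_on S g \<Longrightarrow> continuous_on S (\<lambda>z. perp (g z))"
  by (rule continuous_on_compose2[OF linear_continuous_on[OF bounded_linear_perp]]) auto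

lemma unit_frame_decomp:
  assumes "norm (e::real^2) = 1"
  shows "x = (x \<bullet> e) *\<^sub>R e + (x \<bullet> perp e) *\<^sub>R perp e"
proof -
  have e: "(e$1)\<^sup>2 + (e$2)\<^sup>2 = 1"
    using assms by (simp add: norm_vec2)
  have "x$1 = x$1 * ((e$1)\<^sup>2 + (e$2)\<^sup>2)" "x$2 = x$2 * ((e$1)\<^sup>2 + (e$2)\<^sup>2)"
    by (simp_all add: e)
  then show ?thesis
    by (simp add: vec2_eq_iff inner_vec2 algebra_simps power2_eq_square)
qed

lemma abs_inner_le_norm_unit:
  fixes x e :: "'a::real_inner"
  assumes "norm e = 1"
  shows "\<bar>x \<bullet> e\<bar> \<le> norm x"
  using Cauchy_Schwarz_ineq2[of x e] assms by simp

lemma vector2_has_integral: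
  assumes "(p has_integral P) S" "(q has_integral Q) S"
  shows "((\<lambda>t. vector [p t, q t] :: real^2) has_integral vector [P, Q]) S"
  unfolding vector2_eq_axis_sum by (intro has_integral_add has_integral_scaleR_left assms)

lemma vector2_has_vector_derivative:
  assumes "(p has_real_derivative P) (at u)" "(q has_real_derivative Q) (at u)"
  shows "((\<lambda>u. vector [p u, q u] :: real^2) has_vector_derivative vector [P, Q]) (at u)"
  unfolding vector2_eq_axis_sum using assms by (auto intro!: derivative_eq_intros)

lemma matrix_rows_perp_mult_vector:
  "(vector [g, perp g] :: real^2^2) *v v = vector [g \<bullet> v, perp g \<bullet> v]"
  by (simp add: vec2_eq_iff matrix_vector_mult_def sum_2 inner_vec2)

lemma invertible_matrix_rows_perp:
  assumes "g \<noteq> 0"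
  shows "invertible (vector [g, perp g] :: real^2^2)"
proof -
  have "g$1 \<noteq> 0 \<or> g$2 \<noteq> 0"
    using assms by (auto simp: vec2_eq_iff)
  then have "0 < (g$1)\<^sup>2 + (g$2)\<^sup>2"
    by (auto simp: add_pos_nonneg add_nonneg_pos)
  moreover have "det (vector [g, perp g] :: real^2^2) = (g$1)\<^sup>2 + (g$2)\<^sup>2"
    by (simp add: det_2 power2_eq_square)
  ultimately show ?thesis
    unfolding invertible_det_nz by linarith
qed

lemma matrix_inv_mult_vector_cancel:
  fixes A :: "'a::comm_semiring_1^'n^'n"
  assumes "invertible A"
  shows "matrix_inv A *v (A *v v) = v"
proof -
  have "A ** matrix_inv A = mat 1 \<and> matrix_inv A ** A = mat 1"
    using assms unfolding invertible_def matrix_inv_def by (rule someI_ex)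
  then show ?thesis
    by (simp add: matrix_vector_mul_assoc)
qed

lemma continuous_on_sphere_eq_off_finite:
  fixes G H :: "'a::euclidean_space \<Rightarrow> 'b::t2_space"
  assumes dim: "2 \<le> DIM('a)" and \<rho>: "0 < \<rho>" and Z: "finite Z"
    and cont: "continuous_on (sphere a \<rho>) G" "continuous_on (sphere a \<rho>) H"
    and eq: "\<And>y. y \<in> sphere a \<rho> - Z \<Longrightarrow> G y = H y" and y: "y \<in> sphere a \<rho>"
  shows "G y = H y"
proof -
  have Int_Un_Diff_eq: "Z \<inter> sphere a \<rho> \<union> (sphere a \<rho> - Z) = sphere a \<rho>"
    by blast
  have "sphere a \<rho> \<noteq> {z}" for z
  proof
    assume "sphere a \<rho> = {z}"
    moreover have "2 *\<^sub>R a - y \<in> sphere a \<rho>"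
      using y by (simp add: dist_norm norm_minus_commute algebra_simps scaleR_2)
    ultimately have "2 *\<^sub>R a - y = y"
      using y by (metis singletonD)
    then have "2 *\<^sub>R (a - y) = 0"
      by (simp add: algebra_simps scaleR_2)
    then have "y = a"
      by simp
    then show False
      using y \<rho> by simp
  qed
  then have "y islimpt sphere a \<rho>"
    by (intro connected_imp_perfect[OF connected_sphere[OF dim] y])
  then have "y islimpt (sphere a \<rho> - Z)"
    using islimpt_Un_finite[of "Z \<inter> sphere a \<rho>" y "sphere a \<rho> - Z"] Z
    by (simp add: Int_Un_Diff_eq)
  then have nontrivial: "\<not> trivial_limit (at y within (sphere a \<rho> - Z))"
    by (simp add: trivial_limit_within)
  have lim: "(G \<longlongrightarrow> G y) (at y within (sphere a \<rho> - Z))" "(H \<longlongrightarrow> H y) (at y within (sphere a \<rho> - Z))"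
    using cont y unfolding continuous_on_def by (blast intro: tendsto_within_subset)+
  have "\<forall>\<^sub>F z in at y within (sphere a \<rho> - Z). G z = H z"
    using eq by (auto simp: eventually_at_filter)
  from tendsto_cong[THEN iffD1, OF this lim(1)] have "(H \<longlongrightarrow> G y) (at y within (sphere a \<rho> - Z))" .
  from tendsto_unique[OF nontrivial this lim(2)] show ?thesis .
qed

section \<open>Integrals over the real line\<close>

lemma has_integral_UNIV_vanishing_outside_Icc:
  fixes g :: "real \<Rightarrow> 'b::euclidean_space"
  assumes "continuous_on {a..b} g" "\<And>t. t \<notin> {a..b} \<Longrightarrow> g t = 0"
  shows "(g has_integral integral {a..b} g) UNIV"
  by (rule has_integral_on_superset[OF integrable_integral[OF integrable_continuous_real[OF assms(1)]]])
     (use assms in auto)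

lemma integral_Icc_eq_vanishing_outside:
  fixes g :: "real \<Rightarrow> 'b::euclidean_space"
  assumes "continuous_on UNIV g" "\<And>t. t \<notin> {a..b} \<Longrightarrow> g t = 0" "{a..b} \<subseteq> {c..d}"
  shows "integral {c..d} g = integral {a..b} g"
proof -
  have "(g has_integral integral {a..b} g) {a..b}"
    by (intro integrable_integral integrable_continuous_real continuous_on_subset[OF assms(1)]) auto
  then have "(g has_integral integral {a..b} g) {c..d}"
    by (rule has_integral_on_superset) (use assms in auto)
  then show ?thesis
    by (rule integral_unique)
qed

lemma has_integral_superset_vanishing:
  fixes g :: "'n::euclidean_space \<Rightarrow> 'b::banach"
  assumes "(g has_integral i) S" "S \<subseteq> T" "\<And>y. y \<in> T - S \<Longrightarrow> g y = 0"
  shows "(g has_integral i) T"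
proof -
  have "((\<lambda>y. if y \<in> S then g y else 0) has_integral i) T"
    by (subst has_integral_restrict[OF assms(2)]) (rule assms(1))
  then show ?thesis
    by (rule has_integral_cong[THEN iffD1, rotated]) (use assms(3) in auto)
qed

lemma integral_periodic_shift:
  fixes N :: "real \<Rightarrow> 'b::euclidean_space"
  assumes N: "continuous_on UNIV N" "\<And>a. N (a + p) = N a" and c: "-p \<le> c" "c \<le> p"
  shows "integral {0..p} (\<lambda>\<phi>. N (\<phi> + c)) = integral {0..p} N"
proof -
  have int: "N integrable_on {a..b}" for a b
    by (intro integrable_continuous_real continuous_on_subset[OF N(1)]) auto
  have shift: "integral {p + a..p + b} N = integral {a..b} N" for a b
    using integral_shift_real_ivl[of "a + p" p "b + p" N] by (simp add: N(2) add.commute)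
  have "integral {0..p} (\<lambda>\<phi>. N (\<phi> + c)) = integral {c..p + c} N"
    using integral_shift_real_ivl[of c c "p + c" N] by simp
  also have "\<dots> = integral {0..p} N"
  proof (cases "0 \<le> c")
    case True
    have "integral {c..p + c} N = integral {c..p} N + integral {p..p + c} N"
      by (rule Henstock_Kurzweil_Integration.integral_combine[symmetric]) (use True c int in auto)
    also have "integral {p..p + c} N = integral {0..c} N"
      using shift[of 0 c] by simp
    also have "integral {c..p} N + integral {0..c} N = integral {0..p} N"
      by (subst add.commute, rule Henstock_Kurzweil_Integration.integral_combine) (use True c int in auto)
    finally show ?thesis .
  next
    case False
    have "integral {c..p + c} N = integral {c..0} N + integral {0..p + c} N"
      by (rule Henstock_Kurzweil_Integration.integral_combine[symmetric]) (use False c int in auto)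
    also have "integral {c..0} N = integral {p + c..p} N"
      using shift[of c 0] by simp
    also have "integral {p + c..p} N + integral {0..p + c} N = integral {0..p} N"
      by (subst add.commute, rule Henstock_Kurzweil_Integration.integral_combine) (use False c int in auto)
    finally show ?thesis .
  qed
  finally show ?thesis .
qed

lemma cos_gt_zero_Icc: "b < pi/2 \<Longrightarrow> \<beta> \<in> {-b..b} \<Longrightarrow> 0 < cos \<beta>"
  by (rule cos_gt_zero_pi) auto

lemma continuous_on_tan_Icc:
  assumes b: "b < pi/2" and g: "continuous_on S g" "g ` S \<subseteq> {-b..b}"
  shows "continuous_on S (\<lambda>z. tan (g z))"
proof -
  have "continuous_on {-b..b} tan"
    using cos_gt_zero_Icc[OF b] by (intro continuous_on_tan continuous_on_id) force
  from continuous_on_compose2[OF this g] show ?thesis .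
qed

lemma integral_punctured_eq_odd_part:
  fixes g :: "real \<Rightarrow> 'b::euclidean_space"
  assumes g: "continuous_on UNIV g" "\<And>u. T \<le> \<bar>u\<bar> \<Longrightarrow> g u = 0"
    and e: "0 < \<epsilon>" "\<epsilon> \<le> T"
  shows "integral {s. \<epsilon> \<le> \<bar>t0 - s\<bar>} (\<lambda>s. (1 / (t0 - s)) *\<^sub>R g (s - t0))
       = integral {\<epsilon>..T} (\<lambda>u. (1 / u) *\<^sub>R (g (- u) - g u))"
proof -
  have gc [continuous_intros]: "continuous_on S (\<lambda>z. g (a z))" if "continuous_on S a" for S a
    by (rule continuous_on_compose2[OF g(1) that]) auto
  define h where "h = (\<lambda>s. (1 / (t0 - s)) *\<^sub>R g (s - t0))"
  define J1 where "J1 = integral {\<epsilon>..T} (\<lambda>u. (1 / - u) *\<^sub>R g u)"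
  define J2 where "J2 = integral {\<epsilon>..T} (\<lambda>u. (1 / u) *\<^sub>R g (- u))"
  have i1: "((\<lambda>u. (1 / - u) *\<^sub>R g u) has_integral J1) {\<epsilon>..T}"
    unfolding J1_def using e by (intro integrable_integral integrable_continuous_real continuous_intros) auto
  have i2: "((\<lambda>u. (1 / u) *\<^sub>R g (- u)) has_integral J2) {\<epsilon>..T}"
    unfolding J2_def using e by (intro integrable_integral integrable_continuous_real continuous_intros) auto
  have "((h \<circ> (+) t0) has_integral J1) {\<epsilon>..T}"
    using i1 by (simp add: h_def o_def)
  then have h1: "(h has_integral J1) {\<epsilon> + t0..T + t0}"
    by (simp add: has_integral_shift_Icc_real)
  have "((\<lambda>u. (h \<circ> (+) t0) (- u)) has_integral J2) {\<epsilon>..T}"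
    using i2 by (simp add: h_def o_def)
  then have "((h \<circ> (+) t0) has_integral J2) {-T..-\<epsilon>}"
    by (simp add: has_integral_reflect_real[symmetric, where f="h \<circ> (+) t0"])
  then have h2: "(h has_integral J2) {-T + t0..-\<epsilon> + t0}"
    by (simp add: has_integral_shift_Icc_real)
  have "(h has_integral J1 + J2) ({\<epsilon> + t0..T + t0} \<union> {-T + t0..-\<epsilon> + t0})"
    by (rule has_integral_Un[OF h1 h2]) (rule negligible_subset[of "{}"], use e in auto)
  then have "(h has_integral J1 + J2) {s. \<epsilon> \<le> \<bar>t0 - s\<bar>}"
    by (rule has_integral_superset_vanishing) (auto simp: h_def g(2))
  moreover have "((\<lambda>u. (1 / u) *\<^sub>R (g (- u) - g u)) has_integral J1 + J2) {\<epsilon>..T}"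
    using has_integral_add[OF i1 i2] by (simp add: algebra_simps)
  ultimately show ?thesis
    unfolding h_def by (metis integral_unique)
qed

lemma integral_rescale_vanishing:
  fixes g :: "real \<Rightarrow> 'b::euclidean_space"
  assumes g: "continuous_on UNIV g" "\<And>\<rho>. T \<le> \<rho> \<Longrightarrow> g \<rho> = 0"
    and c: "0 < c" "c \<le> 1" and T: "0 \<le> T"
  shows "integral {0..T} (\<lambda>s. g (s / c)) = c *\<^sub>R integral {0..T} g"
proof -
  have T_le: "T \<le> T / c"
    using c T by (simp add: le_divide_eq mult_left_le)
  have "((\<lambda>\<rho>. c *\<^sub>R g ((c * \<rho>) / c)) has_integral integral {c * 0..c * (T / c)} (\<lambda>s. g (s / c))) {0..T / c}"
  proof (rule has_integral_substitution)
    show "(*) c ` {0..T / c} \<subseteq> {0..T}"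
      using c by (auto simp: le_divide_eq mult.commute)
    show "continuous_on {0..T} (\<lambda>s. g (s / c))"
      using c by (intro continuous_on_compose2[OF g(1)]) (auto intro!: continuous_intros)
  qed (use c T T_le in \<open>auto intro!: derivative_eq_intros\<close>)
  then have "((\<lambda>\<rho>. c *\<^sub>R g \<rho>) has_integral integral {0..T} (\<lambda>s. g (s / c))) {0..T / c}"
    using c by simp
  from integral_unique[OF this] have "integral {0..T} (\<lambda>s. g (s / c)) = c *\<^sub>R integral {0..T / c} g"
    by simp
  also have "integral {0..T / c} g = integral {0..T} g + integral {T..T / c} g"
    using T T_le
    by (intro Henstock_Kurzweil_Integration.integral_combine[symmetric] integrable_continuous_real
        continuous_on_subset[OF g(1)]) auto
  also have "integral {T..T / c} g = integral {T..T / c} (\<lambda>_. 0)"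
    by (rule integral_cong) (simp add: g(2))
  finally show ?thesis
    by simp
qed

lemma has_real_derivative_integral_upper:
  fixes R :: "real \<Rightarrow> real"
  assumes R: "continuous_on UNIV R" and v: "\<bar>v\<bar> < L"
  shows "((\<lambda>w. integral {-L..w} R) has_real_derivative R v) (at v)"
proof -
  have "((\<lambda>w. integral {-L..w} R) has_vector_derivative R v) (at v within {-L..L})"
    by (rule integral_has_vector_derivative, rule continuous_on_subset[OF R]) (use v in auto)
  moreover have "at v within {-L..L} = at v"
    using v by (intro at_within_Icc_at) auto
  ultimately show ?thesis
    by (simp add: has_real_derivative_iff_has_vector_derivative)
qed

lemma integral_translates_eq_diff:
  fixes R Psi :: "real \<Rightarrow> real"
  assumes a: "a \<noteq> 0" and T: "0 \<le> T"
    and Psi: "\<And>\<tau>. \<tau> \<in> {0..T} \<Longrightarrow> (Psi has_real_derivative R (u + \<tau> * a)) (at (u + \<tau> * a))"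
  shows "integral {0..T} (\<lambda>\<tau>. R (u + \<tau> * a)) = (Psi (u + T * a) - Psi u) / a"
proof -
  have "((\<lambda>\<tau>. R (u + \<tau> * a) * a) has_integral (Psi (u + T * a) - Psi (u + 0 * a))) {0..T}"
  proof (rule fundamental_theorem_of_calculus[OF T])
    fix \<tau> assume \<tau>: "\<tau> \<in> {0..T}"
    have "((\<lambda>\<tau>. u + \<tau> * a) has_real_derivative a) (at \<tau>)"
      by (auto intro!: derivative_eq_intros)
    then have "((\<lambda>\<tau>. Psi (u + \<tau> * a)) has_real_derivative R (u + \<tau> * a) * a) (at \<tau>)"
      by (rule DERIV_chain2[where g="\<lambda>\<tau>. u + \<tau> * a", OF Psi[OF \<tau>]])
    then show "((\<lambda>\<tau>. Psi (u + \<tau> * a)) has_vector_derivative R (u + \<tau> * a) * a) (at \<tau> within {0..T})"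
      by (simp add: has_real_derivative_iff_has_vector_derivative has_vector_derivative_at_within)
  qed
  from integral_unique[OF this]
  have "integral {0..T} (\<lambda>\<tau>. R (u + \<tau> * a)) * a = Psi (u + T * a) - Psi u"
    by simp
  then show ?thesis
    using a by (simp add: eq_divide_eq)
qed

lemma integral_translates_has_real_derivative:
  fixes R :: "real \<Rightarrow> real"
  assumes R: "continuous_on UNIV R" and a: "a \<noteq> 0" and T: "0 \<le> T"
  shows "((\<lambda>u. integral {0..T} (\<lambda>\<tau>. R (u + \<tau> * a))) has_real_derivative (R (s + T * a) - R s) / a) (at s)"
proof -
  define L where "L = \<bar>s\<bar> + T * \<bar>a\<bar> + 2"
  define Psi where "Psi w = integral {-L..w} R" for w
  have inside: "\<bar>u + \<tau> * a\<bar> < L" if "\<bar>u - s\<bar> < 1" "\<tau> \<in> {0..T}" for u \<tau>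
  proof -
    have "\<bar>\<tau> * a\<bar> = \<tau> * \<bar>a\<bar>"
      using that(2) by (simp add: abs_mult)
    also have "\<dots> \<le> T * \<bar>a\<bar>"
      using that(2) by (intro mult_right_mono) auto
    finally show ?thesis
      using that(1) unfolding L_def by arith
  qed
  have dPsi: "(Psi has_real_derivative R (u + \<tau> * a)) (at (u + \<tau> * a))"
    if "\<bar>u - s\<bar> < 1" "\<tau> \<in> {0..T}" for u \<tau>
    unfolding Psi_def[abs_def] by (rule has_real_derivative_integral_upper[OF R inside[OF that]])
  have "((\<lambda>u. Psi (u + T * a)) has_real_derivative R (s + T * a)) (at s)"
    "(Psi has_real_derivative R s) (at s)"
    using dPsi[of s T] dPsi[of s 0] T by (simp_all add: DERIV_shift)
  from DERIV_cdivide[OF DERIV_diff[OF this], of a]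
  have "((\<lambda>u. (Psi (u + T * a) - Psi u) / a) has_real_derivative (R (s + T * a) - R s) / a) (at s)" .
  then show ?thesis
  proof (rule has_field_derivative_transform_within_open[of _ _ _ "ball s 1"])
    fix u assume "u \<in> ball s 1"
    then have "\<bar>u - s\<bar> < 1"
      by (simp add: dist_real_def abs_minus_commute)
    from integral_translates_eq_diff[OF a T dPsi[OF this]]
    show "(Psi (u + T * a) - Psi u) / a = integral {0..T} (\<lambda>\<tau>. R (u + \<tau> * a))"
      by simp
  qed auto
qed

section \<open>Radon transforms of compactly supported functions\<close>

locale continuous_supported =
  fixes h :: "real^2 \<Rightarrow> 'b::euclidean_space" and r :: real
  assumes r_pos: "0 < r"
    and continuous: "continuous_on UNIV h"
    and vanishes: "\<And>y. r \<le> norm y \<Longrightarrow> h y = 0"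
begin

lemma continuous_on_compose_h [continuous_intros]:
  "continuous_on S g \<Longrightarrow> continuous_on S (\<lambda>z. h (g z))"
  by (rule continuous_on_compose2[OF continuous]) auto

lemma vanishes_unit_coord:
  assumes "norm e = 1" "r \<le> \<bar>y \<bullet> e\<bar>"
  shows "h y = 0"
  using vanishes[of y] abs_inner_le_norm_unit[OF assms(1), of y] assms(2) by auto

lemma vanishes_line_outside:
  assumes "norm \<psi> = 1" "r \<le> \<bar>t\<bar>"
  shows "h (v *\<^sub>R \<psi> + t *\<^sub>R perp \<psi>) = 0"
proof (rule vanishes_unit_coord)
  show "norm (perp \<psi>) = 1"
    using assms(1) by simp
  have "perp \<psi> \<bullet> perp \<psi> = 1"
    using assms(1) by (simp add: norm_eq_1[symmetric])
  then show "r \<le> \<bar>(v *\<^sub>R \<psi> + t *\<^sub>R perp \<psi>) \<bullet> perp \<psi>\<bar>"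
    using assms(2) by (simp add: inner_add_left)
qed

lemma radon_eq_integral_Icc:
  assumes "norm \<psi> = 1" "r \<le> T"
  shows "radon h \<psi> v = integral {-T..T} (\<lambda>t. h (v *\<^sub>R \<psi> + t *\<^sub>R perp \<psi>))"
proof -
  have "((\<lambda>t. h (v *\<^sub>R \<psi> + t *\<^sub>R perp \<psi>)) has_integral
      integral {-r..r} (\<lambda>t. h (v *\<^sub>R \<psi> + t *\<^sub>R perp \<psi>))) UNIV"
    by (rule has_integral_UNIV_vanishing_outside_Icc)
       (auto intro!: continuous_intros vanishes_line_outside assms(1))
  then have "radon h \<psi> v = integral {-r..r} (\<lambda>t. h (v *\<^sub>R \<psi> + t *\<^sub>R perp \<psi>))"
    by (simp add: radon_def integral_unique)
  also have "\<dots> = integral {-T..T} (\<lambda>t. h (v *\<^sub>R \<psi> + t *\<^sub>R perp \<psi>))"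
    by (rule integral_Icc_eq_vanishing_outside[symmetric])
       (use assms in \<open>auto intro!: continuous_intros vanishes_line_outside\<close>)
  finally show ?thesis .
qed

lemma has_integral_radon:
  assumes "norm \<psi> = 1"
  shows "((\<lambda>t. h (v *\<^sub>R \<psi> + t *\<^sub>R perp \<psi>)) has_integral radon h \<psi> v) UNIV"
  unfolding radon_eq_integral_Icc[OF assms order_refl]
  by (rule has_integral_UNIV_vanishing_outside_Icc)
     (auto intro!: continuous_intros vanishes_line_outside assms)

lemma radon_eq_integral_shifted:
  assumes "norm \<psi> = 1" "r + \<bar>c\<bar> \<le> T"
  shows "radon h \<psi> v = integral {-T..T} (\<lambda>t. h (v *\<^sub>R \<psi> + (t + c) *\<^sub>R perp \<psi>))"
proof -
  define g where "g = (\<lambda>t. h (v *\<^sub>R \<psi> + t *\<^sub>R perp \<psi>))"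
  have "integral {-T..T} (\<lambda>t. g (t + c)) = integral {-T + c..T + c} g"
    using integral_shift_real_ivl[of "-T + c" c "T + c" g] by simp
  also have "\<dots> = integral {-r..r} g"
    unfolding g_def using assms
    by (intro integral_Icc_eq_vanishing_outside) (auto intro!: continuous_intros vanishes_line_outside)
  also have "\<dots> = radon h \<psi> v"
    using radon_eq_integral_Icc[OF assms(1) order_refl] by (simp add: g_def)
  finally show ?thesis
    by (simp add: g_def)
qed

lemma radon_vanishes:
  assumes "norm \<psi> = 1" "r \<le> \<bar>v\<bar>"
  shows "radon h \<psi> v = 0"
proof -
  have "\<psi> \<bullet> \<psi> = 1"
    using assms(1) by (simp add: norm_eq_1[symmetric])
  then have "h (v *\<^sub>R \<psi> + t *\<^sub>R perp \<psi>) = 0" for t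
    using assms by (intro vanishes_unit_coord[OF assms(1)]) (simp add: inner_add_left)
  then show ?thesis
    by (simp add: radon_def)
qed

lemma radon_continuous: "continuous_on (sphere 0 1 \<times> UNIV) (\<lambda>(\<psi>, s). radon h \<psi> s)"
proof -
  have "continuous_on (sphere 0 1 \<times> UNIV)
     (\<lambda>z. integral (cbox (-r) r) (\<lambda>t. h (snd z *\<^sub>R fst z + t *\<^sub>R perp (fst z))))"
    by (rule integral_continuous_on_param) (simp add: split_beta, intro continuous_intros)
  then show ?thesis
    by (rule continuous_on_eq) (auto simp: radon_eq_integral_Icc[of _ r] cbox_interval split_beta)
qed

lemma continuous_on_radon_line:
  assumes "norm \<psi> = 1"
  shows "continuous_on UNIV (radon h \<psi>)"
proof -
  have "continuous_on UNIV (\<lambda>s. (\<lambda>(\<psi>, s). radon h \<psi> s) (\<psi>, s))"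
    by (rule continuous_on_compose2[OF radon_continuous]) (use assms in \<open>auto intro!: continuous_intros\<close>)
  then show ?thesis
    by simp
qed

lemma radon_eq_integral_centered:
  assumes \<theta>: "norm \<theta> = 1" and T: "r + norm x \<le> T"
  shows "radon h \<theta> v = integral {-T..T} (\<lambda>t. h (x + (v - x \<bullet> \<theta>) *\<^sub>R \<theta> + t *\<^sub>R perp \<theta>))"
proof -
  have "x + (v - x \<bullet> \<theta>) *\<^sub>R \<theta> + t *\<^sub>R perp \<theta> = v *\<^sub>R \<theta> + (t + x \<bullet> perp \<theta>) *\<^sub>R perp \<theta>" for t
    by (subst (1) unit_frame_decomp[OF \<theta>, of x]) (simp add: algebra_simps)
  moreover have "r + \<bar>x \<bullet> perp \<theta>\<bar> \<le> T"
    using abs_inner_le_norm_unit[of "perp \<theta>" x] \<theta> T by simp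
  ultimately show ?thesis
    by (simp add: radon_eq_integral_shifted[OF \<theta>])
qed

lemma continuous_on_radon_sphere:
  "continuous_on (sphere 0 1) (\<lambda>\<psi>. radon h \<psi> s)"
proof -
  have "continuous_on (sphere 0 1) (\<lambda>\<psi>. (\<lambda>(\<psi>, s). radon h \<psi> s) (\<psi>, s))"
    by (rule continuous_on_compose2[OF radon_continuous]) (auto intro!: continuous_intros)
  then show ?thesis
    by simp
qed

lemma radon_inner:
  assumes "norm \<psi> = 1"
  shows "radon (\<lambda>y. h y \<bullet> w) \<psi> u = radon h \<psi> u \<bullet> w"
proof -
  from has_integral_linear[OF has_integral_radon[OF assms] bounded_linear_inner_left[of w]]
  show ?thesis
    by (simp add: radon_def o_def integral_unique)
qed

lemma continuous_supported_inner: "continuous_supported (\<lambda>y. h y \<bullet> w) r"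
  by unfold_locales (auto intro!: continuous_intros r_pos simp: vanishes)

end

section \<open>Radon transform of a divergent beam\<close>

context
  fixes h :: "real^2 \<Rightarrow> real" and r :: real and \<gamma> \<psi> :: "real^2"
  assumes h: "continuous_supported h r"
    and unit: "norm \<gamma> = 1" "norm \<psi> = 1"
    and transversal: "\<psi> \<bullet> \<gamma> \<noteq> 0"
begin

interpretation continuous_supported h r
  by (rule h)

lemma beam_point_frame:
  "u *\<^sub>R \<psi> + t *\<^sub>R perp \<psi> + \<tau> *\<^sub>R \<gamma> =
     (u + \<tau> * (\<psi> \<bullet> \<gamma>)) *\<^sub>R \<psi> + (t + \<tau> * (\<gamma> \<bullet> perp \<psi>)) *\<^sub>R perp \<psi>"
  by (subst (1) unit_frame_decomp[OF unit(2), of \<gamma>]) (simp add: algebra_simps inner_commute)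

lemma beam_point_vanishes:
  assumes "r \<le> \<bar>u + \<tau> * (\<psi> \<bullet> \<gamma>)\<bar> \<or> r \<le> \<bar>t + \<tau> * (\<gamma> \<bullet> perp \<psi>)\<bar>"
  shows "h (u *\<^sub>R \<psi> + t *\<^sub>R perp \<psi> + \<tau> *\<^sub>R \<gamma>) = 0"
proof -
  have "\<psi> \<bullet> \<psi> = 1" "perp \<psi> \<bullet> perp \<psi> = 1"
    using unit(2) by (simp_all add: norm_eq_1[symmetric])
  then have coords: "(u *\<^sub>R \<psi> + t *\<^sub>R perp \<psi> + \<tau> *\<^sub>R \<gamma>) \<bullet> \<psi> = u + \<tau> * (\<psi> \<bullet> \<gamma>)"
    "(u *\<^sub>R \<psi> + t *\<^sub>R perp \<psi> + \<tau> *\<^sub>R \<gamma>) \<bullet> perp \<psi> = t + \<tau> * (\<gamma> \<bullet> perp \<psi>)"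
    unfolding beam_point_frame by (simp_all add: inner_add_left)
  from assms show ?thesis
  proof
    assume "r \<le> \<bar>u + \<tau> * (\<psi> \<bullet> \<gamma>)\<bar>"
    then show ?thesis
      by (intro vanishes_unit_coord[OF unit(2)]) (simp only: coords)
  next
    assume "r \<le> \<bar>t + \<tau> * (\<gamma> \<bullet> perp \<psi>)\<bar>"
    then show ?thesis
      using unit(2) by (intro vanishes_unit_coord[of "perp \<psi>"]) (simp_all only: coords norm_perp)
  qed
qed

lemma divbeam_line_eq_integral:
  assumes T: "\<bar>u\<bar> + r \<le> T * \<bar>\<psi> \<bullet> \<gamma>\<bar>"
  shows "divbeam \<gamma> h (u *\<^sub>R \<psi> + t *\<^sub>R perp \<psi>) =
    integral {0..T} (\<lambda>\<tau>. h (u *\<^sub>R \<psi> + t *\<^sub>R perp \<psi> + \<tau> *\<^sub>R \<gamma>))"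
proof -
  have "((\<lambda>\<tau>. h (u *\<^sub>R \<psi> + t *\<^sub>R perp \<psi> + \<tau> *\<^sub>R \<gamma>)) has_integral
     integral {0..T} (\<lambda>\<tau>. h (u *\<^sub>R \<psi> + t *\<^sub>R perp \<psi> + \<tau> *\<^sub>R \<gamma>))) {0..}"
  proof (rule has_integral_superset_vanishing)
    show "((\<lambda>\<tau>. h (u *\<^sub>R \<psi> + t *\<^sub>R perp \<psi> + \<tau> *\<^sub>R \<gamma>)) has_integral
       integral {0..T} (\<lambda>\<tau>. h (u *\<^sub>R \<psi> + t *\<^sub>R perp \<psi> + \<tau> *\<^sub>R \<gamma>))) {0..T}"
      by (intro integrable_integral integrable_continuous_real continuous_intros)
    fix \<tau> assume "\<tau> \<in> {0..} - {0..T}"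
    then have "T * \<bar>\<psi> \<bullet> \<gamma>\<bar> \<le> \<tau> * \<bar>\<psi> \<bullet> \<gamma>\<bar>"
      by (intro mult_right_mono) auto
    then have "r \<le> \<bar>u + \<tau> * (\<psi> \<bullet> \<gamma>)\<bar>"
      using T \<open>\<tau> \<in> {0..} - {0..T}\<close> by (auto simp: abs_mult)
    then show "h (u *\<^sub>R \<psi> + t *\<^sub>R perp \<psi> + \<tau> *\<^sub>R \<gamma>) = 0"
      by (intro beam_point_vanishes) simp
  qed auto
  then show ?thesis
    by (simp add: divbeam_def integral_unique)
qed

lemma abs_beam_normal_shift_le: "0 \<le> \<tau> \<Longrightarrow> \<bar>\<tau> * (\<gamma> \<bullet> perp \<psi>)\<bar> \<le> \<tau>"
  using abs_inner_le_norm_unit[of "perp \<psi>" \<gamma>] unit mult_left_mono[of "\<bar>\<gamma> \<bullet> perp \<psi>\<bar>" 1 \<tau>]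
  by (simp add: abs_mult)

lemma integral_beam_line_eq_radon:
  assumes "0 \<le> \<tau>" "\<tau> \<le> T"
  shows "integral {-(T + r)..T + r} (\<lambda>t. h (u *\<^sub>R \<psi> + t *\<^sub>R perp \<psi> + \<tau> *\<^sub>R \<gamma>)) = radon h \<psi> (u + \<tau> * (\<psi> \<bullet> \<gamma>))"
proof -
  have "radon h \<psi> (u + \<tau> * (\<psi> \<bullet> \<gamma>)) = integral {-(T + r)..T + r}
      (\<lambda>t. h ((u + \<tau> * (\<psi> \<bullet> \<gamma>)) *\<^sub>R \<psi> + (t + \<tau> * (\<gamma> \<bullet> perp \<psi>)) *\<^sub>R perp \<psi>))"
    using abs_beam_normal_shift_le[OF assms(1)] assms by (intro radon_eq_integral_shifted[OF unit(2)]) auto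
  then show ?thesis
    by (simp only: beam_point_frame)
qed

lemma has_integral_divbeam_line:
  assumes T: "0 \<le> T" "\<bar>u\<bar> + r \<le> T * \<bar>\<psi> \<bullet> \<gamma>\<bar>"
  shows "((\<lambda>t. divbeam \<gamma> h (u *\<^sub>R \<psi> + t *\<^sub>R perp \<psi>)) has_integral
           integral {0..T} (\<lambda>\<tau>. radon h \<psi> (u + \<tau> * (\<psi> \<bullet> \<gamma>)))) UNIV"
proof -
  define g where "g = (\<lambda>t \<tau>. h (u *\<^sub>R \<psi> + t *\<^sub>R perp \<psi> + \<tau> *\<^sub>R \<gamma>))"
  define k where "k = (\<lambda>t. integral {0..T} (g t))"
  have gc: "continuous_on UNIV (\<lambda>(t, \<tau>). g t \<tau>)"
    unfolding g_def split_beta by (intro continuous_intros)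
  have "continuous_on UNIV (\<lambda>t. integral (cbox 0 T) (g t))"
    by (rule integral_continuous_on_param, rule continuous_on_subset[OF gc]) auto
  then have kc: "continuous_on UNIV k"
    by (simp add: k_def cbox_interval)
  have k0: "k t = 0" if "t \<notin> {-(T + r)..T + r}" for t
  proof -
    have "g t \<tau> = 0" if "\<tau> \<in> {0..T}" for \<tau>
      using abs_beam_normal_shift_le[of \<tau>] that \<open>t \<notin> _\<close> unfolding g_def
      by (intro beam_point_vanishes disjI2) auto
    then have "k t = integral {0..T} (\<lambda>_. 0)"
      unfolding k_def by (rule integral_cong)
    then show ?thesis
      by simp
  qed
  have "(k has_integral integral {-(T + r)..T + r} k) UNIV"
    by (rule has_integral_UNIV_vanishing_outside_Icc[OF continuous_on_subset[OF kc] k0]) auto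
  moreover have "divbeam \<gamma> h (u *\<^sub>R \<psi> + t *\<^sub>R perp \<psi>) = k t" for t
    using divbeam_line_eq_integral[OF T(2)] by (simp add: k_def g_def)
  moreover have "integral {-(T + r)..T + r} k = integral {0..T} (\<lambda>\<tau>. integral {-(T + r)..T + r} (\<lambda>t. g t \<tau>))"
    using integral_swap_continuous[OF continuous_on_subset[OF gc], of "-(T + r)" 0 "T + r" T]
    by (simp add: k_def cbox_interval)
  moreover have "\<dots> = integral {0..T} (\<lambda>\<tau>. radon h \<psi> (u + \<tau> * (\<psi> \<bullet> \<gamma>)))"
    unfolding g_def by (intro integral_cong integral_beam_line_eq_radon) auto
  ultimately show ?thesis
    by simp
qed

lemma has_integral_radon_divbeam:
  "((\<lambda>t. divbeam \<gamma> h (u *\<^sub>R \<psi> + t *\<^sub>R perp \<psi>)) has_integral radon (divbeam \<gamma> h) \<psi> u) UNIV"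
proof -
  define T where "T = (\<bar>u\<bar> + r) / \<bar>\<psi> \<bullet> \<gamma>\<bar>"
  have "0 \<le> T" "\<bar>u\<bar> + r \<le> T * \<bar>\<psi> \<bullet> \<gamma>\<bar>"
    using transversal r_pos by (simp_all add: T_def)
  from has_integral_divbeam_line[OF this] show ?thesis
    by (simp add: radon_def integral_unique)
qed

lemma radon_divbeam_has_derivative:
  "((\<lambda>u. radon (divbeam \<gamma> h) \<psi> u) has_real_derivative - radon h \<psi> s / (\<psi> \<bullet> \<gamma>)) (at s)"
proof -
  define a where "a = \<psi> \<bullet> \<gamma>"
  define T where "T = (\<bar>s\<bar> + 1 + r) / \<bar>a\<bar>"
  have T: "0 \<le> T" "T * \<bar>a\<bar> = \<bar>s\<bar> + 1 + r"
    using transversal r_pos by (simp_all add: T_def a_def)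
  have rep: "radon (divbeam \<gamma> h) \<psi> u = integral {0..T} (\<lambda>\<tau>. radon h \<psi> (u + \<tau> * a))"
    if "u \<in> ball s 1" for u
  proof -
    have "\<bar>u\<bar> + r \<le> T * \<bar>\<psi> \<bullet> \<gamma>\<bar>"
      using that T(2) by (auto simp: a_def dist_real_def)
    from has_integral_divbeam_line[OF T(1) this] show ?thesis
      by (simp add: radon_def integral_unique a_def)
  qed
  have "radon h \<psi> (s + T * a) = 0"
  proof (rule radon_vanishes[OF unit(2)])
    have "\<bar>T * a\<bar> = \<bar>s\<bar> + 1 + r"
      using T by (simp add: abs_mult)
    then show "r \<le> \<bar>s + T * a\<bar>"
      by arith
  qed
  then have "((\<lambda>u. integral {0..T} (\<lambda>\<tau>. radon h \<psi> (u + \<tau> * a))) has_real_derivative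
      - radon h \<psi> s / (\<psi> \<bullet> \<gamma>)) (at s)"
    using integral_translates_has_real_derivative[OF continuous_on_radon_line[OF unit(2)] _ T(1), of a s]
      transversal by (simp add: a_def)
  then show ?thesis
  proof (rule has_field_derivative_transform_within_open[of _ _ _ "ball s 1"])
    fix u assume "u \<in> ball s 1"
    then show "integral {0..T} (\<lambda>\<tau>. radon h \<psi> (u + \<tau> * a)) = radon (divbeam \<gamma> h) \<psi> u"
      by (simp add: rep)
  qed auto
qed

end

section \<open>Radon inversion\<close>

locale C2_supported =
  fixes f :: "real^2 \<Rightarrow> 'b::euclidean_space" and Df :: "real^2 \<Rightarrow> (real^2) \<Rightarrow>\<^sub>L 'b"
    and D2 :: "real^2 \<Rightarrow> (real^2) \<Rightarrow>\<^sub>L ((real^2) \<Rightarrow>\<^sub>L 'b)" and r :: real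
  assumes radius_pos: "0 < r"
    and has_derivative_f: "\<And>x. (f has_derivative blinfun_apply (Df x)) (at x)"
    and has_derivative_Df: "\<And>x. (Df has_derivative blinfun_apply (D2 x)) (at x)"
    and continuous_D2: "continuous_on UNIV D2"
    and vanishes_all: "\<And>x. r \<le> norm x \<Longrightarrow> f x = 0 \<and> Df x = 0 \<and> D2 x = 0"
begin

sublocale continuous_supported f r
proof
  show "continuous_on UNIV f"
    by (rule has_derivative_continuous_on) (use has_derivative_f in \<open>auto intro: has_derivative_at_withinI\<close>)
qed (use radius_pos vanishes_all in auto)

lemma continuous_Df: "continuous_on UNIV Df"
  by (rule has_derivative_continuous_on) (use has_derivative_Df in \<open>auto intro: has_derivative_at_withinI\<close>)

lemma continuous_on_compose_Df [continuous_intros]: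
  "continuous_on S g \<Longrightarrow> continuous_on S (\<lambda>z. Df (g z))"
  by (rule continuous_on_compose2[OF continuous_Df]) auto

lemma continuous_on_compose_D2 [continuous_intros]:
  "continuous_on S g \<Longrightarrow> continuous_on S (\<lambda>z. D2 (g z))"
  by (rule continuous_on_compose2[OF continuous_D2]) auto

lemma vanishes_all_unit_coord:
  assumes "norm e = 1" "r \<le> \<bar>y \<bullet> e\<bar>"
  shows "f y = 0 \<and> Df y = 0 \<and> D2 y = 0"
  using vanishes_all[of y] abs_inner_le_norm_unit[OF assms(1), of y] assms(2) by auto

lemma has_vector_derivative_f_line:
  "((\<lambda>v. f (a + v *\<^sub>R e)) has_vector_derivative Df (a + v *\<^sub>R e) e) (at v within S)"
proof -
  have "((\<lambda>v. a + v *\<^sub>R e) has_derivative (\<lambda>h. h *\<^sub>R e)) (at v within S)"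
    by (auto intro!: derivative_eq_intros)
  from has_derivative_compose[OF this has_derivative_f] show ?thesis
    by (simp add: has_vector_derivative_def blinfun.scaleR_right o_def)
qed

lemma has_vector_derivative_Df_line:
  "((\<lambda>v. Df (a + v *\<^sub>R e) w) has_vector_derivative D2 (a + v *\<^sub>R e) e w) (at v within S)"
proof -
  have "((\<lambda>v. a + v *\<^sub>R e) has_derivative (\<lambda>h. h *\<^sub>R e)) (at v within S)"
    by (auto intro!: derivative_eq_intros)
  from has_derivative_compose[OF this has_derivative_Df]
  have "((\<lambda>v. Df (a + v *\<^sub>R e)) has_derivative (\<lambda>h. h *\<^sub>R D2 (a + v *\<^sub>R e) e)) (at v within S)"
    by (simp add: blinfun.scaleR_right o_def)
  from bounded_linear.has_derivative[OF blinfun.bounded_linear_left this, of w]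
  show ?thesis
    by (simp add: has_vector_derivative_def blinfun.scaleR_left)
qed

lemma radon_has_vector_derivative:
  assumes \<theta>: "norm \<theta> = 1" and T: "r + norm x \<le> T"
  shows "(radon f \<theta> has_vector_derivative
     integral {-T..T} (\<lambda>t. Df (x + (v - x \<bullet> \<theta>) *\<^sub>R \<theta> + t *\<^sub>R perp \<theta>) \<theta>)) (at v)"
proof -
  have line: "x + (v - x \<bullet> \<theta>) *\<^sub>R \<theta> + t *\<^sub>R perp \<theta> = (x - (x \<bullet> \<theta>) *\<^sub>R \<theta> + t *\<^sub>R perp \<theta>) + v *\<^sub>R \<theta>"
    for v t by (simp add: algebra_simps)
  have "((\<lambda>v. integral (cbox (-T) T) (\<lambda>t. f (x + (v - x \<bullet> \<theta>) *\<^sub>R \<theta> + t *\<^sub>R perp \<theta>)))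
      has_vector_derivative integral (cbox (-T) T) (\<lambda>t. Df (x + (v - x \<bullet> \<theta>) *\<^sub>R \<theta> + t *\<^sub>R perp \<theta>) \<theta>))
      (at v within UNIV)"
  proof (rule leibniz_rule_vector_derivative)
    show "((\<lambda>v. f (x + (v - x \<bullet> \<theta>) *\<^sub>R \<theta> + t *\<^sub>R perp \<theta>)) has_vector_derivative
        Df (x + (v - x \<bullet> \<theta>) *\<^sub>R \<theta> + t *\<^sub>R perp \<theta>) \<theta>) (at v within UNIV)" for v t
      unfolding line by (rule has_vector_derivative_f_line)
    show "(\<lambda>t. f (x + (v - x \<bullet> \<theta>) *\<^sub>R \<theta> + t *\<^sub>R perp \<theta>)) integrable_on cbox (- T) T" for v
      by (intro integrable_continuous continuous_intros)
    show "continuous_on (UNIV \<times> cbox (- T) T)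
        (\<lambda>(v, t). Df (x + (v - x \<bullet> \<theta>) *\<^sub>R \<theta> + t *\<^sub>R perp \<theta>) \<theta>)"
      by (simp add: split_beta) (intro continuous_intros)
  qed auto
  then show ?thesis
    by (simp add: radon_eq_integral_centered[OF \<theta> T, abs_def] cbox_interval)
qed

end

locale C2_supported_at = C2_supported f Df D2 r
  for f :: "real^2 \<Rightarrow> 'b::euclidean_space" and Df D2 r +
  fixes x :: "real^2"
begin

definition window :: real where
  "window = r + norm x"

definition frame_deriv :: "real \<Rightarrow> real \<Rightarrow> real \<Rightarrow> 'b" where
  "frame_deriv \<phi> s t = Df (x + s *\<^sub>R polar_dir \<phi> + t *\<^sub>R perp (polar_dir \<phi>)) (polar_dir \<phi>)"

text \<open>By \<open>scaled_sym_quot\<close>, \<open>sym_quot \<phi> s t\<close> is the difference quotient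
  \<open>(frame_deriv \<phi> (-s) t - frame_deriv \<phi> s t) / s\<close>; writing it as an average of the second
  derivative keeps it continuous at \<open>s = 0\<close>.\<close>
definition sym_quot :: "real \<Rightarrow> real \<Rightarrow> real \<Rightarrow> 'b" where
  "sym_quot \<phi> s t = - integral {-1..1}
     (\<lambda>\<sigma>. D2 (x + (\<sigma> * s) *\<^sub>R polar_dir \<phi> + t *\<^sub>R perp (polar_dir \<phi>)) (polar_dir \<phi>) (polar_dir \<phi>))"

definition line_deriv :: "real \<Rightarrow> real \<Rightarrow> 'b" where
  "line_deriv \<phi> u = integral {-window..window} (frame_deriv \<phi> u)"

definition line_quot :: "real \<Rightarrow> real \<Rightarrow> 'b" where
  "line_quot \<phi> s = integral {-window..window} (sym_quot \<phi> s)"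

lemma window_pos: "0 < window"
  using radius_pos by (simp add: window_def add_pos_nonneg)

lemma frame_point_coords:
  "(x + s *\<^sub>R polar_dir \<phi> + t *\<^sub>R perp (polar_dir \<phi>)) \<bullet> polar_dir \<phi> = x \<bullet> polar_dir \<phi> + s"
  "(x + s *\<^sub>R polar_dir \<phi> + t *\<^sub>R perp (polar_dir \<phi>)) \<bullet> perp (polar_dir \<phi>) = x \<bullet> perp (polar_dir \<phi>) + t"
proof -
  have "polar_dir \<phi> \<bullet> polar_dir \<phi> = 1"
    by (simp add: norm_eq_1[symmetric])
  then show "(x + s *\<^sub>R polar_dir \<phi> + t *\<^sub>R perp (polar_dir \<phi>)) \<bullet> polar_dir \<phi> = x \<bullet> polar_dir \<phi> + s"
    "(x + s *\<^sub>R polar_dir \<phi> + t *\<^sub>R perp (polar_dir \<phi>)) \<bullet> perp (polar_dir \<phi>) = x \<bullet> perp (polar_dir \<phi>) + t"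
    by (simp_all add: inner_add_left)
qed

lemma frame_point_far:
  assumes "window \<le> \<bar>s\<bar> \<or> window \<le> \<bar>t\<bar>"
  shows "f (x + s *\<^sub>R polar_dir \<phi> + t *\<^sub>R perp (polar_dir \<phi>)) = 0"
    and "Df (x + s *\<^sub>R polar_dir \<phi> + t *\<^sub>R perp (polar_dir \<phi>)) = 0"
    and "D2 (x + s *\<^sub>R polar_dir \<phi> + t *\<^sub>R perp (polar_dir \<phi>)) = 0"
proof -
  have "\<bar>x \<bullet> polar_dir \<phi>\<bar> \<le> norm x" "\<bar>x \<bullet> perp (polar_dir \<phi>)\<bar> \<le> norm x"
    by (simp_all add: abs_inner_le_norm_unit)
  then have "r \<le> \<bar>(x + s *\<^sub>R polar_dir \<phi> + t *\<^sub>R perp (polar_dir \<phi>)) \<bullet> polar_dir \<phi>\<bar> \<or>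
      r \<le> \<bar>(x + s *\<^sub>R polar_dir \<phi> + t *\<^sub>R perp (polar_dir \<phi>)) \<bullet> perp (polar_dir \<phi>)\<bar>"
    using assms unfolding frame_point_coords window_def by arith
  then have "f (x + s *\<^sub>R polar_dir \<phi> + t *\<^sub>R perp (polar_dir \<phi>)) = 0 \<and>
      Df (x + s *\<^sub>R polar_dir \<phi> + t *\<^sub>R perp (polar_dir \<phi>)) = 0 \<and>
      D2 (x + s *\<^sub>R polar_dir \<phi> + t *\<^sub>R perp (polar_dir \<phi>)) = 0"
    by (metis vanishes_all_unit_coord norm_polar_dir norm_perp)
  then show "f (x + s *\<^sub>R polar_dir \<phi> + t *\<^sub>R perp (polar_dir \<phi>)) = 0"
    and "Df (x + s *\<^sub>R polar_dir \<phi> + t *\<^sub>R perp (polar_dir \<phi>)) = 0"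
    and "D2 (x + s *\<^sub>R polar_dir \<phi> + t *\<^sub>R perp (polar_dir \<phi>)) = 0"
    by simp_all
qed

lemma frame_deriv_vanishes: "window \<le> \<bar>s\<bar> \<or> window \<le> \<bar>t\<bar> \<Longrightarrow> frame_deriv \<phi> s t = 0"
  by (simp add: frame_deriv_def frame_point_far(2))

lemma sym_quot_vanishes: "window \<le> \<bar>t\<bar> \<Longrightarrow> sym_quot \<phi> s t = 0"
  by (simp add: sym_quot_def frame_point_far(3))

lemma continuous_on_frame_deriv [continuous_intros]:
  fixes a :: "'c::t2_space \<Rightarrow> real"
  assumes "continuous_on S a" "continuous_on S b" "continuous_on S c"
  shows "continuous_on S (\<lambda>z. frame_deriv (a z) (b z) (c z))"
  unfolding frame_deriv_def by (intro continuous_intros assms)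

lemma continuous_sym_quot: "continuous_on UNIV (\<lambda>(\<phi>, s, t). sym_quot \<phi> s t)"
proof -
  have "continuous_on UNIV (\<lambda>z::real \<times> real \<times> real. integral (cbox (-1) 1)
     (\<lambda>\<sigma>. D2 (x + (\<sigma> * fst (snd z)) *\<^sub>R polar_dir (fst z) + snd (snd z) *\<^sub>R perp (polar_dir (fst z)))
        (polar_dir (fst z)) (polar_dir (fst z))))"
    by (rule integral_continuous_on_param) (simp add: split_beta, intro continuous_intros)
  then show ?thesis
    by (auto simp: sym_quot_def split_beta cbox_interval intro!: continuous_intros)
qed

lemma continuous_on_sym_quot [continuous_intros]:
  fixes a :: "'c::t2_space \<Rightarrow> real"
  assumes "continuous_on S a" "continuous_on S b" "continuous_on S c"
  shows "continuous_on S (\<lambda>z. sym_quot (a z) (b z) (c z))"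
proof -
  have "continuous_on S (\<lambda>z. (a z, b z, c z))"
    by (intro continuous_intros assms)
  from continuous_on_compose2[OF continuous_sym_quot this] show ?thesis
    by simp
qed

lemma scaled_sym_quot: "s *\<^sub>R sym_quot \<phi> s t = frame_deriv \<phi> (-s) t - frame_deriv \<phi> s t"
proof -
  define a where "a = x + t *\<^sub>R perp (polar_dir \<phi>)"
  define e where "e = s *\<^sub>R polar_dir \<phi>"
  have point: "x + (\<sigma> * s) *\<^sub>R polar_dir \<phi> + t *\<^sub>R perp (polar_dir \<phi>) = a + \<sigma> *\<^sub>R e" for \<sigma>
    by (simp add: a_def e_def algebra_simps)
  have "((\<lambda>\<sigma>. D2 (a + \<sigma> *\<^sub>R e) e (polar_dir \<phi>)) has_integral
      Df (a + 1 *\<^sub>R e) (polar_dir \<phi>) - Df (a + (-1) *\<^sub>R e) (polar_dir \<phi>)) {-1..1}"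
    by (rule fundamental_theorem_of_calculus) (auto intro: has_vector_derivative_Df_line)
  then have "((\<lambda>\<sigma>. s *\<^sub>R D2 (x + (\<sigma> * s) *\<^sub>R polar_dir \<phi> + t *\<^sub>R perp (polar_dir \<phi>))
      (polar_dir \<phi>) (polar_dir \<phi>)) has_integral frame_deriv \<phi> s t - frame_deriv \<phi> (-s) t) {-1..1}"
    by (simp add: point frame_deriv_def a_def e_def blinfun.scaleR_left blinfun.scaleR_right algebra_simps)
  from integral_unique[OF this] show ?thesis
    by (simp add: sym_quot_def integral_scaleR_right)
qed

lemma continuous_on_line_deriv [continuous_intros]:
  fixes a :: "'c::t2_space \<Rightarrow> real"
  assumes "continuous_on S a" "continuous_on S b"
  shows "continuous_on S (\<lambda>z. line_deriv (a z) (b z))"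
proof -
  have "continuous_on UNIV (\<lambda>z::real \<times> real. integral (cbox (-window) window) (frame_deriv (fst z) (snd z)))"
    by (rule integral_continuous_on_param) (simp add: split_beta, intro continuous_intros)
  from continuous_on_compose2[OF this, of S "\<lambda>z. (a z, b z)"] assms show ?thesis
    by (auto simp: line_deriv_def cbox_interval intro!: continuous_intros)
qed

lemma continuous_on_line_quot [continuous_intros]:
  fixes a :: "'c::t2_space \<Rightarrow> real"
  assumes "continuous_on S a" "continuous_on S b"
  shows "continuous_on S (\<lambda>z. line_quot (a z) (b z))"
proof -
  have "continuous_on UNIV (\<lambda>z::real \<times> real. integral (cbox (-window) window) (sym_quot (fst z) (snd z)))"
    by (rule integral_continuous_on_param) (simp add: split_beta, intro continuous_intros)
  from continuous_on_compose2[OF this, of S "\<lambda>z. (a z, b z)"] assms show ?thesis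
    by (auto simp: line_quot_def cbox_interval intro!: continuous_intros)
qed

lemma line_deriv_vanishes:
  assumes "window \<le> \<bar>u\<bar>"
  shows "line_deriv \<phi> u = 0"
proof -
  have "frame_deriv \<phi> u = (\<lambda>t. 0)"
    using assms by (auto intro!: frame_deriv_vanishes)
  then show ?thesis
    by (simp add: line_deriv_def)
qed

lemma scaled_line_quot: "s *\<^sub>R line_quot \<phi> s = line_deriv \<phi> (-s) - line_deriv \<phi> s"
proof -
  have int: "frame_deriv \<phi> u integrable_on {-window..window}" for u
    by (intro integrable_continuous_real continuous_intros)
  have "s *\<^sub>R line_quot \<phi> s = integral {-window..window} (\<lambda>t. s *\<^sub>R sym_quot \<phi> s t)"
    by (simp add: line_quot_def)
  also have "\<dots> = integral {-window..window} (\<lambda>t. frame_deriv \<phi> (-s) t - frame_deriv \<phi> s t)"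
    by (simp add: scaled_sym_quot)
  also have "\<dots> = line_deriv \<phi> (-s) - line_deriv \<phi> s"
    unfolding line_deriv_def by (rule integral_diff[OF int int])
  finally show ?thesis .
qed

lemma vector_derivative_radon:
  "vector_derivative (radon f (polar_dir \<phi>)) (at v) = line_deriv \<phi> (v - x \<bullet> polar_dir \<phi>)"
proof (rule vector_derivative_at)
  have "frame_deriv \<phi> (v - x \<bullet> polar_dir \<phi>) = (\<lambda>t. Df (x + (v - x \<bullet> polar_dir \<phi>) *\<^sub>R polar_dir \<phi> +
      t *\<^sub>R perp (polar_dir \<phi>)) (polar_dir \<phi>))"
    by (simp add: frame_deriv_def fun_eq_iff)
  then show "(radon f (polar_dir \<phi>) has_vector_derivative line_deriv \<phi> (v - x \<bullet> polar_dir \<phi>)) (at v)"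
    using radon_has_vector_derivative[of "polar_dir \<phi>" x window v] by (simp add: window_def line_deriv_def)
qed

lemma hilbert_radon_derivative:
  "hilbert (\<lambda>s. vector_derivative (radon f (polar_dir \<phi>)) (at s)) (x \<bullet> polar_dir \<phi>)
    = (1 / pi) *\<^sub>R integral {0..window} (line_quot \<phi>)"
proof -
  have "continuous_on {0..window} (\<lambda>\<epsilon>. integral {\<epsilon>..window} (line_quot \<phi>))"
    by (intro indefinite_integral_continuous_1' integrable_continuous_real continuous_intros)
  then have lim: "((\<lambda>\<epsilon>. integral {\<epsilon>..window} (line_quot \<phi>)) \<longlongrightarrow> integral {0..window} (line_quot \<phi>)) (at_right 0)"
    using continuous_on_Icc_at_rightD[OF _ window_pos] by simp
  have "integral {s. \<epsilon> \<le> \<bar>x \<bullet> polar_dir \<phi> - s\<bar>}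
      (\<lambda>s. (1 / (x \<bullet> polar_dir \<phi> - s)) *\<^sub>R vector_derivative (radon f (polar_dir \<phi>)) (at s))
      = integral {\<epsilon>..window} (line_quot \<phi>)" if "0 < \<epsilon>" "\<epsilon> \<le> window" for \<epsilon>
  proof -
    have "integral {\<epsilon>..window} (\<lambda>u. (1 / u) *\<^sub>R (line_deriv \<phi> (- u) - line_deriv \<phi> u)) =
        integral {\<epsilon>..window} (line_quot \<phi>)"
      using that by (intro integral_cong) (simp add: scaled_line_quot[symmetric])
    with that show ?thesis
      by (simp add: vector_derivative_radon integral_punctured_eq_odd_part[where T=window]
          continuous_on_line_deriv line_deriv_vanishes)
  qed
  then have "\<forall>\<^sub>F \<epsilon> in at_right 0. integral {\<epsilon>..window} (line_quot \<phi>) = integral {s. \<epsilon> \<le> \<bar>x \<bullet> polar_dir \<phi> - s\<bar>}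
      (\<lambda>s. (1 / (x \<bullet> polar_dir \<phi> - s)) *\<^sub>R vector_derivative (radon f (polar_dir \<phi>)) (at s))"
    unfolding eventually_at_right_field using window_pos by (intro exI[of _ window]) auto
  from tendsto_cong[THEN iffD1, OF this lim] show ?thesis
    unfolding hilbert_def by (subst tendsto_Lim) auto
qed

definition ray_normal_integral :: "real \<Rightarrow> 'b" where
  "ray_normal_integral \<alpha> = integral {0..window} (\<lambda>\<rho>. Df (x + \<rho> *\<^sub>R polar_dir \<alpha>) (perp (polar_dir \<alpha>)))"

lemma continuous_ray_normal_integral: "continuous_on UNIV ray_normal_integral"
proof -
  have "continuous_on UNIV (\<lambda>\<alpha>. integral (cbox 0 window) (\<lambda>\<rho>. Df (x + \<rho> *\<^sub>R polar_dir \<alpha>) (perp (polar_dir \<alpha>))))"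
    by (rule integral_continuous_on_param) (simp add: split_beta, intro continuous_intros)
  then show ?thesis
    by (simp add: ray_normal_integral_def[abs_def] cbox_interval)
qed

lemma continuous_on_ray_normal_integral [continuous_intros]:
  "continuous_on S g \<Longrightarrow> continuous_on S (\<lambda>z. ray_normal_integral (g z))"
  by (rule continuous_on_compose2[OF continuous_ray_normal_integral]) auto

lemma ray_normal_integral_periodic: "ray_normal_integral (\<alpha> + 2*pi) = ray_normal_integral \<alpha>"
  by (simp add: ray_normal_integral_def polar_dir_periodic)

lemma ray_point_far:
  assumes "window \<le> \<rho>"
  shows "f (x + \<rho> *\<^sub>R polar_dir \<alpha>) = 0" "Df (x + \<rho> *\<^sub>R polar_dir \<alpha>) = 0"
proof -
  have "window \<le> \<bar>\<rho>\<bar>"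
    using assms by linarith
  then show "f (x + \<rho> *\<^sub>R polar_dir \<alpha>) = 0" "Df (x + \<rho> *\<^sub>R polar_dir \<alpha>) = 0"
    using frame_point_far(1,2)[of \<rho> 0 \<alpha>] by simp_all
qed

lemma integral_ray_radial_deriv:
  "integral {0..window} (\<lambda>\<rho>. Df (x + \<rho> *\<^sub>R polar_dir \<alpha>) (polar_dir \<alpha>)) = - f x"
proof -
  have "((\<lambda>\<rho>. Df (x + \<rho> *\<^sub>R polar_dir \<alpha>) (polar_dir \<alpha>)) has_integral
     f (x + window *\<^sub>R polar_dir \<alpha>) - f (x + 0 *\<^sub>R polar_dir \<alpha>)) {0..window}"
    using window_pos by (intro fundamental_theorem_of_calculus has_vector_derivative_f_line) auto
  then show ?thesis
    by (simp add: integral_unique ray_point_far)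
qed

lemma integral_ray_deriv:
  "integral {0..window} (\<lambda>\<rho>. Df (x + \<rho> *\<^sub>R polar_dir \<alpha>) (polar_dir \<phi>))
     = - cos (\<phi> - \<alpha>) *\<^sub>R f x + sin (\<phi> - \<alpha>) *\<^sub>R ray_normal_integral \<alpha>"
proof -
  have dir: "polar_dir \<phi> = cos (\<phi> - \<alpha>) *\<^sub>R polar_dir \<alpha> + sin (\<phi> - \<alpha>) *\<^sub>R perp (polar_dir \<alpha>)"
    using polar_dir_add[of \<alpha> "\<phi> - \<alpha>"] by simp
  have int: "(\<lambda>\<rho>. a *\<^sub>R Df (x + \<rho> *\<^sub>R polar_dir \<alpha>) e) integrable_on {0..window}" for a e
    by (intro integrable_continuous_real continuous_intros)
  have "integral {0..window} (\<lambda>\<rho>. Df (x + \<rho> *\<^sub>R polar_dir \<alpha>) (polar_dir \<phi>))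
      = integral {0..window} (\<lambda>\<rho>. cos (\<phi> - \<alpha>) *\<^sub>R Df (x + \<rho> *\<^sub>R polar_dir \<alpha>) (polar_dir \<alpha>)
          + sin (\<phi> - \<alpha>) *\<^sub>R Df (x + \<rho> *\<^sub>R polar_dir \<alpha>) (perp (polar_dir \<alpha>)))"
    by (subst dir) (simp add: blinfun.add_right blinfun.scaleR_right)
  also have "\<dots> = cos (\<phi> - \<alpha>) *\<^sub>R integral {0..window} (\<lambda>\<rho>. Df (x + \<rho> *\<^sub>R polar_dir \<alpha>) (polar_dir \<alpha>))
      + sin (\<phi> - \<alpha>) *\<^sub>R ray_normal_integral \<alpha>"
    using int by (simp add: integral_add ray_normal_integral_def del: integrable_on_cmult_iff)
  finally show ?thesis
    by (simp add: integral_ray_radial_deriv)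
qed

lemma integral_ray_deriv_rescaled:
  assumes "0 < cos \<beta>"
  shows "integral {0..window} (\<lambda>s. Df (x + (s / cos \<beta>) *\<^sub>R polar_dir \<alpha>) (polar_dir \<phi>))
    = cos \<beta> *\<^sub>R integral {0..window} (\<lambda>\<rho>. Df (x + \<rho> *\<^sub>R polar_dir \<alpha>) (polar_dir \<phi>))"
  using window_pos assms
  by (intro integral_rescale_vanishing[where g="\<lambda>\<rho>. Df (x + \<rho> *\<^sub>R polar_dir \<alpha>) (polar_dir \<phi>)"])
     (auto intro!: continuous_intros simp: ray_point_far)

text \<open>In the frame of \<open>polar_dir \<phi>\<close> centred at \<open>x\<close>, the points \<open>(\<plusminus>s, s tan \<beta>)\<close> lie on the
  rays from \<open>x\<close> in the directions \<open>\<phi> + \<beta>\<close> and \<open>\<phi> + \<pi> - \<beta>\<close>, at distance \<open>s / cos \<beta>\<close>.\<close>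
lemma frame_deriv_cone:
  assumes "0 < cos \<beta>"
  shows "frame_deriv \<phi> s (s * tan \<beta>) = Df (x + (s / cos \<beta>) *\<^sub>R polar_dir (\<phi> + \<beta>)) (polar_dir \<phi>)"
    and "frame_deriv \<phi> (-s) (s * tan \<beta>) = Df (x + (s / cos \<beta>) *\<^sub>R polar_dir (\<phi> + (pi - \<beta>))) (polar_dir \<phi>)"
proof -
  have "(s / cos \<beta>) *\<^sub>R polar_dir (\<phi> + \<beta>) = s *\<^sub>R polar_dir \<phi> + (s * tan \<beta>) *\<^sub>R perp (polar_dir \<phi>)"
    using assms by (simp add: polar_dir_add tan_def scaleR_add_right)
  then show "frame_deriv \<phi> s (s * tan \<beta>) = Df (x + (s / cos \<beta>) *\<^sub>R polar_dir (\<phi> + \<beta>)) (polar_dir \<phi>)"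
    by (simp add: frame_deriv_def add.assoc)
  have "(s / cos \<beta>) *\<^sub>R polar_dir (\<phi> + (pi - \<beta>)) = (-s) *\<^sub>R polar_dir \<phi> + (s * tan \<beta>) *\<^sub>R perp (polar_dir \<phi>)"
    using assms by (simp add: vec2_eq_iff tan_def cos_add sin_add cos_diff sin_diff field_simps)
  then have "x + (-s) *\<^sub>R polar_dir \<phi> + (s * tan \<beta>) *\<^sub>R perp (polar_dir \<phi>) =
      x + (s / cos \<beta>) *\<^sub>R polar_dir (\<phi> + (pi - \<beta>))"
    by (simp add: algebra_simps)
  then show "frame_deriv \<phi> (-s) (s * tan \<beta>) = Df (x + (s / cos \<beta>) *\<^sub>R polar_dir (\<phi> + (pi - \<beta>))) (polar_dir \<phi>)"
    by (simp only: frame_deriv_def)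
qed

definition cone_integrand :: "real \<Rightarrow> real \<Rightarrow> 'b" where
  "cone_integrand \<phi> \<beta> = 2 *\<^sub>R f x - tan \<beta> *\<^sub>R (ray_normal_integral (\<phi> + (pi - \<beta>)) - ray_normal_integral (\<phi> + \<beta>))"

lemma integral_sym_quot_cone:
  assumes cb: "0 < cos \<beta>"
  shows "integral {0..window} (\<lambda>s. (s * inverse ((cos \<beta>)\<^sup>2)) *\<^sub>R sym_quot \<phi> s (s * tan \<beta>)) = cone_integrand \<phi> \<beta>"
proof -
  define c where "c = inverse ((cos \<beta>)\<^sup>2)"
  define I where "I \<alpha> = integral {0..window} (\<lambda>\<rho>. Df (x + \<rho> *\<^sub>R polar_dir \<alpha>) (polar_dir \<phi>))" for \<alpha>
  have int: "(\<lambda>s. Df (x + (s / cos \<beta>) *\<^sub>R polar_dir \<alpha>) (polar_dir \<phi>)) integrable_on {0..window}" for \<alpha>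
    using cb by (intro integrable_continuous_real continuous_intros) auto
  have "(s * c) *\<^sub>R sym_quot \<phi> s (s * tan \<beta>) = c *\<^sub>R (Df (x + (s / cos \<beta>) *\<^sub>R polar_dir (\<phi> + (pi - \<beta>))) (polar_dir \<phi>)
      - Df (x + (s / cos \<beta>) *\<^sub>R polar_dir (\<phi> + \<beta>)) (polar_dir \<phi>))" for s
  proof -
    have "(s * c) *\<^sub>R sym_quot \<phi> s (s * tan \<beta>) = c *\<^sub>R (s *\<^sub>R sym_quot \<phi> s (s * tan \<beta>))"
      by (simp add: mult.commute)
    then show ?thesis
      by (simp add: scaled_sym_quot frame_deriv_cone[OF cb])
  qed
  then have "integral {0..window} (\<lambda>s. (s * c) *\<^sub>R sym_quot \<phi> s (s * tan \<beta>))
      = c *\<^sub>R (cos \<beta> *\<^sub>R I (\<phi> + (pi - \<beta>)) - cos \<beta> *\<^sub>R I (\<phi> + \<beta>))"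
    using int by (simp add: integral_diff integral_ray_deriv_rescaled[OF cb] I_def)
  also have "\<dots> = (c * cos \<beta> * cos \<beta>) *\<^sub>R (2 *\<^sub>R f x)
      - (c * cos \<beta> * sin \<beta>) *\<^sub>R (ray_normal_integral (\<phi> + (pi - \<beta>)) - ray_normal_integral (\<phi> + \<beta>))"
    by (simp add: I_def integral_ray_deriv cos_diff sin_diff algebra_simps scaleR_2)
  also have "\<dots> = cone_integrand \<phi> \<beta>"
  proof -
    have "c * cos \<beta> * cos \<beta> = 1" "c * cos \<beta> * sin \<beta> = tan \<beta>"
      using cb by (simp_all add: c_def power2_eq_square tan_def field_simps)
    then show ?thesis
      by (simp add: cone_integrand_def)
  qed
  finally show ?thesis
    by (simp add: c_def)
qed

lemma continuous_cone_integrand: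
  assumes "b < pi/2"
  shows "continuous_on (UNIV \<times> {-b..b}) (\<lambda>(\<phi>, \<beta>). cone_integrand \<phi> \<beta>)"
proof -
  have "continuous_on (UNIV \<times> {-b..b}) (\<lambda>z. tan (snd z))"
    by (rule continuous_on_tan_Icc[OF assms]) (auto intro!: continuous_intros)
  then show ?thesis
    unfolding cone_integrand_def split_beta by (intro continuous_intros)
qed

lemma integral_cone_integrand_angle:
  assumes \<beta>: "\<bar>\<beta>\<bar> < pi/2"
  shows "integral {0..2*pi} (\<lambda>\<phi>. cone_integrand \<phi> \<beta>) = (4 * pi) *\<^sub>R f x"
proof -
  have int: "(\<lambda>\<phi>. ray_normal_integral (\<phi> + c)) integrable_on {0..2*pi}" for c
    by (intro integrable_continuous_real continuous_intros)
  have shift: "integral {0..2*pi} (\<lambda>\<phi>. ray_normal_integral (\<phi> + c)) = integral {0..2*pi} ray_normal_integral"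
    if "-2*pi \<le> c" "c \<le> 2*pi" for c
    using integral_periodic_shift[OF continuous_ray_normal_integral ray_normal_integral_periodic] that by simp
  have "integral {0..2*pi} (\<lambda>\<phi>. cone_integrand \<phi> \<beta>) = integral {0..2*pi} (\<lambda>\<phi>. 2 *\<^sub>R f x)
      - integral {0..2*pi} (\<lambda>\<phi>. tan \<beta> *\<^sub>R (ray_normal_integral (\<phi> + (pi - \<beta>)) - ray_normal_integral (\<phi> + \<beta>)))"
    unfolding cone_integrand_def
    by (intro integral_diff integrable_continuous_real continuous_intros)
  also have "\<dots> = (4 * pi) *\<^sub>R f x - tan \<beta> *\<^sub>R (integral {0..2*pi} (\<lambda>\<phi>. ray_normal_integral (\<phi> + (pi - \<beta>)))
        - integral {0..2*pi} (\<lambda>\<phi>. ray_normal_integral (\<phi> + \<beta>)))"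
    using int by (simp add: integral_diff)
  also have "\<dots> = (4 * pi) *\<^sub>R f x"
    using \<beta> by (simp add: shift)
  finally show ?thesis .
qed

lemma integral_cone_integrand:
  assumes b: "0 < b" "b < pi/2"
  shows "integral {0..2*pi} (\<lambda>\<phi>. integral {-b..b} (cone_integrand \<phi>)) = (2 * b * (4 * pi)) *\<^sub>R f x"
proof -
  have "integral {0..2*pi} (\<lambda>\<phi>. integral {-b..b} (cone_integrand \<phi>))
     = integral {-b..b} (\<lambda>\<beta>. integral {0..2*pi} (\<lambda>\<phi>. cone_integrand \<phi> \<beta>))"
  proof -
    have "continuous_on (cbox (0, -b) (2*pi, b)) (\<lambda>(\<phi>, \<beta>). cone_integrand \<phi> \<beta>)"
      by (rule continuous_on_subset[OF continuous_cone_integrand[OF b(2)]]) (auto simp: cbox_Pair_eq)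
    from integral_swap_continuous[OF this] show ?thesis
      by (simp add: cbox_interval)
  qed
  also have "\<dots> = integral {-b..b} (\<lambda>\<beta>. (4 * pi) *\<^sub>R f x)"
    using b by (intro integral_cong integral_cone_integrand_angle) auto
  finally show ?thesis
    using b by simp
qed

text \<open>The part of \<open>line_quot \<phi> s\<close> over the cone \<open>\<bar>t\<bar> \<le> s tan b\<close>, in the angular
  variable \<open>\<beta> = arctan (t / s)\<close>.\<close>
definition cone_quot :: "real \<Rightarrow> real \<Rightarrow> real \<Rightarrow> 'b" where
  "cone_quot b \<phi> s = integral {-b..b} (\<lambda>\<beta>. (s * inverse ((cos \<beta>)\<^sup>2)) *\<^sub>R sym_quot \<phi> s (s * tan \<beta>))"

lemma continuous_cone_quot:
  assumes b: "b < pi/2"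
  shows "continuous_on UNIV (\<lambda>(\<phi>, s). cone_quot b \<phi> s)"
proof -
  have "continuous_on (UNIV \<times> {-b..b}) (\<lambda>z. tan (snd z))"
    by (rule continuous_on_tan_Icc[OF b]) (auto intro!: continuous_intros)
  moreover have "\<forall>z\<in>UNIV \<times> {-b..b}. cos (snd z) \<noteq> 0"
    using cos_gt_zero_Icc[OF b] by force
  ultimately have "continuous_on (UNIV \<times> cbox (-b) b)
     (\<lambda>(z::real \<times> real, \<beta>). (snd z * inverse ((cos \<beta>)\<^sup>2)) *\<^sub>R sym_quot (fst z) (snd z) (snd z * tan \<beta>))"
    by (simp add: split_beta cbox_interval) (intro continuous_intros, auto)
  then have "continuous_on UNIV (\<lambda>z::real \<times> real. integral (cbox (-b) b)
     (\<lambda>\<beta>. (snd z * inverse ((cos \<beta>)\<^sup>2)) *\<^sub>R sym_quot (fst z) (snd z) (snd z * tan \<beta>)))"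
    by (rule integral_continuous_on_param)
  then show ?thesis
    by (simp add: cone_quot_def split_beta cbox_interval)
qed

lemma continuous_on_cone_quot [continuous_intros]:
  fixes a :: "'c::t2_space \<Rightarrow> real"
  assumes "b < pi/2" "continuous_on S a" "continuous_on S c"
  shows "continuous_on S (\<lambda>z. cone_quot b (a z) (c z))"
proof -
  have "continuous_on S (\<lambda>z. (a z, c z))"
    by (intro continuous_intros assms)
  from continuous_on_compose2[OF continuous_cone_quot[OF assms(1)] this] show ?thesis
    by simp
qed

lemma integral_cone_quot:
  assumes b: "0 < b" "b < pi/2"
  shows "integral {0..window} (cone_quot b \<phi>) = integral {-b..b} (cone_integrand \<phi>)"
proof -
  have "continuous_on (cbox (0, -b) (window, b))
      (\<lambda>(s, \<beta>). (s * inverse ((cos \<beta>)\<^sup>2)) *\<^sub>R sym_quot \<phi> s (s * tan \<beta>))"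
  proof -
    have "continuous_on (cbox (0, -b) (window, b)) (\<lambda>z. tan (snd z))"
      by (rule continuous_on_tan_Icc[OF b(2)]) (auto intro!: continuous_intros simp: cbox_Pair_eq)
    moreover have "\<forall>z\<in>cbox (0, -b) (window, b). cos (snd z) \<noteq> 0"
      using cos_gt_zero_Icc[OF b(2)] by (force simp: cbox_Pair_eq)
    ultimately show ?thesis
      by (simp add: split_beta) (intro continuous_intros, auto)
  qed
  from integral_swap_continuous[OF this]
  have "integral {0..window} (cone_quot b \<phi>) =
      integral {-b..b} (\<lambda>\<beta>. integral {0..window} (\<lambda>s. (s * inverse ((cos \<beta>)\<^sup>2)) *\<^sub>R sym_quot \<phi> s (s * tan \<beta>)))"
    by (simp add: cone_quot_def[abs_def] cbox_interval)
  also have "\<dots> = integral {-b..b} (cone_integrand \<phi>)"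
    using cos_gt_zero_Icc[OF b(2)] by (intro integral_cong integral_sym_quot_cone) auto
  finally show ?thesis .
qed

lemma cone_quot_eq_integral:
  assumes b: "0 < b" "b < pi/2" and s: "0 \<le> s"
  shows "cone_quot b \<phi> s = integral {-(s * tan b)..s * tan b} (sym_quot \<phi> s)"
proof -
  have "((\<lambda>\<beta>. (s * inverse ((cos \<beta>)\<^sup>2)) *\<^sub>R sym_quot \<phi> s (s * tan \<beta>)) has_integral
      integral {s * tan (-b)..s * tan b} (sym_quot \<phi> s)) {-b..b}"
  proof (rule has_integral_substitution[where c="-(s * tan b)" and d="s * tan b"])
    have "0 < tan b"
      using b by (simp add: tan_gt_zero)
    then show "s * tan (- b) \<le> s * tan b"
      using s by (simp add: tan_minus)
    show "(\<lambda>\<beta>. s * tan \<beta>) ` {- b..b} \<subseteq> {- (s * tan b)..s * tan b}"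
    proof safe
      fix \<beta> assume "\<beta> \<in> {-b..b}"
      then have "tan \<beta> \<le> tan b" "tan (-b) \<le> tan \<beta>"
        using b by (intro tan_mono_le; auto)+
      then have "s * tan \<beta> \<le> s * tan b" "s * tan (-b) \<le> s * tan \<beta>"
        using mult_left_mono[OF _ s] by blast+
      then show "s * tan \<beta> \<in> {- (s * tan b)..s * tan b}"
        by (simp add: tan_minus)
    qed
    show "continuous_on {- (s * tan b)..s * tan b} (sym_quot \<phi> s)"
      by (intro continuous_intros)
    fix \<beta> assume "\<beta> \<in> {-b..b}"
    then have "cos \<beta> \<noteq> 0"
      using cos_gt_zero_Icc[OF b(2)] by force
    from DERIV_cmult[OF DERIV_tan[OF this], of s]
    show "((\<lambda>\<beta>. s * tan \<beta>) has_real_derivative s * inverse ((cos \<beta>)\<^sup>2)) (at \<beta> within {- b..b})"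
      by (rule has_field_derivative_at_within)
  qed (use b in auto)
  then show ?thesis
    by (simp add: cone_quot_def integral_unique tan_minus)
qed

lemma sym_quot_bounded:
  obtains B where "0 \<le> B" "\<And>\<phi> s t. \<phi> \<in> {0..2*pi} \<Longrightarrow> s \<in> {0..window} \<Longrightarrow> norm (sym_quot \<phi> s t) \<le> B"
proof -
  define S where "S = {0..2*pi} \<times> {0..window} \<times> {-window..window}"
  have "compact ((\<lambda>(\<phi>, s, t). sym_quot \<phi> s t) ` S)"
    unfolding S_def
    by (intro compact_continuous_image continuous_on_subset[OF continuous_sym_quot] compact_Times compact_Icc) auto
  then obtain B where B: "\<And>y. y \<in> (\<lambda>(\<phi>, s, t). sym_quot \<phi> s t) ` S \<Longrightarrow> norm y \<le> B"
    unfolding bounded_iff by (meson compact_imp_bounded bounded_iff)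
  show ?thesis
  proof (rule that[of "max B 0"])
    fix \<phi> s t assume "\<phi> \<in> {0..2*pi}" "s \<in> {0..window}"
    then show "norm (sym_quot \<phi> s t) \<le> max B 0"
    proof (cases "t \<in> {-window..window}")
      case True
      then have "sym_quot \<phi> s t \<in> (\<lambda>(\<phi>, s, t). sym_quot \<phi> s t) ` S"
        using \<open>\<phi> \<in> _\<close> \<open>s \<in> _\<close> unfolding S_def by force
      then show ?thesis
        using B by fastforce
    qed (auto simp: sym_quot_vanishes)
  qed simp
qed

lemma line_quot_cone_quot_close:
  assumes \<delta>: "0 < \<delta>" "\<delta> \<le> pi/4" and B: "\<And>t. norm (sym_quot \<phi> s t) \<le> B" and s: "s \<in> {0..window}"
  shows "norm (line_quot \<phi> s - cone_quot (pi/2 - \<delta>) \<phi> s) \<le> 4 * window * B"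
    and "window * tan \<delta> \<le> s \<Longrightarrow> line_quot \<phi> s = cone_quot (pi/2 - \<delta>) \<phi> s"
proof -
  define c where "c = s / tan \<delta>"
  have td: "0 < tan \<delta>"
    using \<delta> by (intro tan_gt_zero) auto
  have c: "0 \<le> c" "s * tan (pi/2 - \<delta>) = c"
    using s td unfolding tan_cot by (simp_all add: c_def divide_inverse)
  have cone: "cone_quot (pi/2 - \<delta>) \<phi> s = integral {-c..c} (sym_quot \<phi> s)"
    using cone_quot_eq_integral[of "pi/2 - \<delta>" s \<phi>] \<delta> s c by simp
  have sq: "continuous_on UNIV (sym_quot \<phi> s)"
    by (intro continuous_intros)
  have equal: "line_quot \<phi> s = cone_quot (pi/2 - \<delta>) \<phi> s" if "window \<le> c"
    unfolding cone line_quot_def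
    by (rule integral_Icc_eq_vanishing_outside[OF sq, symmetric]) (use that in \<open>auto simp: sym_quot_vanishes\<close>)
  show "window * tan \<delta> \<le> s \<Longrightarrow> line_quot \<phi> s = cone_quot (pi/2 - \<delta>) \<phi> s"
    using td by (intro equal) (simp add: c_def field_simps)
  have "0 \<le> B"
    using norm_ge_zero[of "sym_quot \<phi> s 0"] B[of 0] by linarith
  have bound: "norm (integral {-a..a} (sym_quot \<phi> s)) \<le> B * (2 * a)" if "0 \<le> a" for a
  proof -
    have "(sym_quot \<phi> s has_integral integral {-a..a} (sym_quot \<phi> s)) (cbox (-a) a)"
      unfolding cbox_interval by (intro integrable_integral integrable_continuous_real continuous_intros)
    from has_integral_bound[OF \<open>0 \<le> B\<close> this B] show ?thesis
      using that by simp
  qed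
  show "norm (line_quot \<phi> s - cone_quot (pi/2 - \<delta>) \<phi> s) \<le> 4 * window * B"
  proof (cases "window \<le> c")
    case True
    then show ?thesis
      using equal \<open>0 \<le> B\<close> window_pos by simp
  next
    case False
    have "norm (line_quot \<phi> s - cone_quot (pi/2 - \<delta>) \<phi> s) \<le> norm (line_quot \<phi> s) + norm (cone_quot (pi/2 - \<delta>) \<phi> s)"
      by (rule norm_triangle_ineq4)
    also have "\<dots> \<le> B * (2 * window) + B * (2 * c)"
      unfolding line_quot_def cone using window_pos c(1) by (intro add_mono bound) simp_all
    also have "\<dots> \<le> 4 * window * B"
      using False \<open>0 \<le> B\<close> by (simp add: algebra_simps mult_left_mono)
    finally show ?thesis .
  qed
qed

lemma integral_line_quot_cone_quot_close:
  assumes \<delta>: "0 < \<delta>" "\<delta> \<le> pi/4" and B: "\<And>s t. s \<in> {0..window} \<Longrightarrow> norm (sym_quot \<phi> s t) \<le> B"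
  shows "norm (integral {0..window} (line_quot \<phi>) - integral {0..window} (cone_quot (pi/2 - \<delta>) \<phi>))
    \<le> 4 * window * B * (window * tan \<delta>)"
proof -
  define e where "e = window * tan \<delta>"
  have "0 < tan \<delta>" "tan \<delta> \<le> tan (pi/4)"
    using \<delta> by (auto intro!: tan_gt_zero tan_mono_le)
  then have e: "0 \<le> e" "e \<le> window"
    using window_pos by (auto simp: e_def tan_45 mult_left_le)
  define D where "D s = line_quot \<phi> s - cone_quot (pi/2 - \<delta>) \<phi> s" for s
  have int: "g integrable_on {u..v}" if "continuous_on UNIV g" for g :: "real \<Rightarrow> 'b" and u v
    by (rule integrable_continuous_real, rule continuous_on_subset[OF that]) auto
  have Dc: "continuous_on UNIV D"
    unfolding D_def using \<delta> by (intro continuous_intros) auto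
  have "integral {0..window} (line_quot \<phi>) - integral {0..window} (cone_quot (pi/2 - \<delta>) \<phi>) =
      integral {0..window} D"
    unfolding D_def using \<delta> by (intro integral_diff[symmetric] int continuous_intros) auto
  also have "\<dots> = integral {0..e} D + integral {e..window} D"
    using e int[OF Dc] by (intro Henstock_Kurzweil_Integration.integral_combine[symmetric]) auto
  also have "integral {e..window} D = integral {e..window} (\<lambda>s. 0)"
    using line_quot_cone_quot_close(2)[OF \<delta> B] e by (intro integral_cong) (auto simp: D_def e_def)
  finally have eq: "integral {0..window} (line_quot \<phi>) - integral {0..window} (cone_quot (pi/2 - \<delta>) \<phi>) =
      integral {0..e} D"
    by simp
  have hi: "(D has_integral integral {0..e} D) (cbox 0 e)"
    unfolding cbox_interval by (rule integrable_integral[OF int[OF Dc]])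
  have bd: "norm (D s) \<le> 4 * window * B" if "s \<in> cbox 0 e" for s
    using line_quot_cone_quot_close(1)[OF \<delta> B] that e by (auto simp: D_def cbox_interval)
  have "norm (sym_quot \<phi> 0 0) \<le> B"
    using B[of 0 0] window_pos by simp
  then have "0 \<le> B"
    using norm_ge_zero order_trans by blast
  then have "0 \<le> 4 * window * B"
    using window_pos by simp
  from has_integral_bound[OF this hi bd] have "norm (integral {0..e} D) \<le> 4 * window * B * e"
    using e by simp
  then show ?thesis
    by (simp add: eq e_def)
qed

lemma continuous_integral_line_quot: "continuous_on UNIV (\<lambda>\<phi>. integral {0..window} (line_quot \<phi>))"
proof -
  have "continuous_on UNIV (\<lambda>\<phi>. integral (cbox 0 window) (line_quot \<phi>))"
    by (rule integral_continuous_on_param) (simp add: split_beta, intro continuous_intros)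
  then show ?thesis
    by (simp add: cbox_interval)
qed

lemma continuous_integral_cone_quot:
  assumes "b < pi/2"
  shows "continuous_on UNIV (\<lambda>\<phi>. integral {0..window} (cone_quot b \<phi>))"
proof -
  have "continuous_on UNIV (\<lambda>\<phi>. integral (cbox 0 window) (cone_quot b \<phi>))"
    by (rule integral_continuous_on_param) (simp add: split_beta, intro continuous_intros assms)
  then show ?thesis
    by (simp add: cbox_interval)
qed

lemma integral_line_quot_approx:
  obtains C where "\<And>\<delta>. 0 < \<delta> \<Longrightarrow> \<delta> \<le> pi/4 \<Longrightarrow>
    norm (integral {0..2*pi} (\<lambda>\<phi>. integral {0..window} (line_quot \<phi>)) - (2 * (pi/2 - \<delta>) * (4 * pi)) *\<^sub>R f x)
      \<le> C * tan \<delta>"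
proof -
  obtain B where B: "0 \<le> B" "\<And>\<phi> s t. \<phi> \<in> {0..2*pi} \<Longrightarrow> s \<in> {0..window} \<Longrightarrow> norm (sym_quot \<phi> s t) \<le> B"
    using sym_quot_bounded by blast
  show ?thesis
  proof (rule that[of "4 * window * B * window * (2 * pi)"])
    fix \<delta> :: real assume \<delta>: "0 < \<delta>" "\<delta> \<le> pi/4"
    define b where "b = pi/2 - \<delta>"
    have b: "0 < b" "b < pi/2"
      using \<delta> by (auto simp: b_def)
    define P where "P \<phi> = integral {0..window} (line_quot \<phi>)" for \<phi>
    define C where "C \<phi> = integral {0..window} (cone_quot b \<phi>)" for \<phi>
    have int: "P integrable_on {0..2*pi}" "C integrable_on {0..2*pi}"
      unfolding P_def[abs_def] C_def[abs_def]
      by (intro integrable_continuous_real continuous_on_subset[OF continuous_integral_line_quot]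
          continuous_on_subset[OF continuous_integral_cone_quot[OF b(2)]]; simp)+
    have "integral {0..2*pi} C = (2 * b * (4 * pi)) *\<^sub>R f x"
      unfolding C_def using integral_cone_quot[OF b] integral_cone_integrand[OF b] by simp
    then have "integral {0..2*pi} P - (2 * b * (4 * pi)) *\<^sub>R f x = integral {0..2*pi} (\<lambda>\<phi>. P \<phi> - C \<phi>)"
      using int by (simp add: integral_diff)
    also have "norm \<dots> \<le> (4 * window * B * (window * tan \<delta>)) * Henstock_Kurzweil_Integration.content (cbox 0 (2*pi))"
    proof (rule has_integral_bound)
      have "0 < tan \<delta>"
        using \<delta> by (intro tan_gt_zero) auto
      then show "0 \<le> 4 * window * B * (window * tan \<delta>)"
        using B(1) window_pos by simp
      show "((\<lambda>\<phi>. P \<phi> - C \<phi>) has_integral integral {0..2*pi} (\<lambda>\<phi>. P \<phi> - C \<phi>)) (cbox 0 (2*pi))"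
        unfolding cbox_interval using int by (intro integrable_integral integrable_diff)
      show "norm (P \<phi> - C \<phi>) \<le> 4 * window * B * (window * tan \<delta>)" if "\<phi> \<in> cbox 0 (2*pi)" for \<phi>
        unfolding P_def C_def b_def
        using that by (intro integral_line_quot_cone_quot_close \<delta> B(2)) (auto simp: cbox_interval)
    qed
    finally show "norm (integral {0..2*pi} (\<lambda>\<phi>. integral {0..window} (line_quot \<phi>)) - (2 * (pi/2 - \<delta>) * (4 * pi)) *\<^sub>R f x)
      \<le> 4 * window * B * window * (2 * pi) * tan \<delta>"
      by (simp add: P_def[abs_def] b_def mult_ac)
  qed
qed

lemma integral_line_quot: "integral {0..2*pi} (\<lambda>\<phi>. integral {0..window} (line_quot \<phi>)) = (4 * pi\<^sup>2) *\<^sub>R f x"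
proof -
  define I where "I = integral {0..2*pi} (\<lambda>\<phi>. integral {0..window} (line_quot \<phi>))"
  obtain C where C: "\<And>\<delta>. 0 < \<delta> \<Longrightarrow> \<delta> \<le> pi/4 \<Longrightarrow> norm (I - (2 * (pi/2 - \<delta>) * (4 * pi)) *\<^sub>R f x) \<le> C * tan \<delta>"
    using integral_line_quot_approx unfolding I_def by blast
  have "((\<lambda>\<delta>. norm (I - (2 * (pi/2 - \<delta>) * (4 * pi)) *\<^sub>R f x)) \<longlongrightarrow>
      norm (I - (2 * (pi/2 - 0) * (4 * pi)) *\<^sub>R f x)) (at_right 0)"
    by (intro tendsto_intros)
  moreover have "((\<lambda>\<delta>. C * tan \<delta>) \<longlongrightarrow> C * tan 0) (at_right 0)"
    by (intro tendsto_intros) simp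
  moreover have "\<forall>\<^sub>F \<delta> in at_right 0. norm (I - (2 * (pi/2 - \<delta>) * (4 * pi)) *\<^sub>R f x) \<le> C * tan \<delta>"
    unfolding eventually_at_right_field by (intro exI[of _ "pi/4"] conjI allI impI C) auto
  ultimately have "norm (I - (2 * (pi/2 - 0) * (4 * pi)) *\<^sub>R f x) \<le> C * tan 0"
    by (intro tendsto_le[of "at_right 0"]) simp_all
  then show ?thesis
    by (simp add: I_def power2_eq_square algebra_simps)
qed

theorem radon_inverse_radon_at: "radon_inverse (radon f) x = f x"
proof -
  have "radon_inverse (radon f) x = (1 / (4 * pi)) *\<^sub>R integral {0..2*pi}
      (\<lambda>\<theta>. hilbert (\<lambda>s. vector_derivative (radon f (polar_dir \<theta>)) (at s)) (x \<bullet> polar_dir \<theta>))"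
    by (simp add: radon_inverse_def polar_dir_def Let_def)
  also have "\<dots> = (1 / (4 * pi)) *\<^sub>R ((1 / pi) *\<^sub>R integral {0..2*pi} (\<lambda>\<theta>. integral {0..window} (line_quot \<theta>)))"
    by (simp add: hilbert_radon_derivative)
  also have "\<dots> = f x"
    by (simp add: integral_line_quot power2_eq_square)
  finally show ?thesis .
qed

end

lemma (in C2_supported) radon_inverse_radon: "radon_inverse (radon f) = f"
proof
  fix x
  interpret C2_supported_at f Df D2 r x ..
  show "radon_inverse (radon f) x = f x"
    by (rule radon_inverse_radon_at)
qed

section \<open>The star transform\<close>

lemma has_derivative_zero_on_open:
  fixes g :: "'a::real_normed_vector \<Rightarrow> 'b::real_normed_vector"
  assumes U: "open U" "x \<in> U" and g: "\<And>y. y \<in> U \<Longrightarrow> g y = 0" and d: "(g has_derivative g') (at x)"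
  shows "g' = (\<lambda>_. 0)"
proof -
  have "(g has_derivative (\<lambda>_. 0)) (at x)"
    by (rule has_derivative_transform_within_open[OF has_derivative_const U]) (use g in auto)
  then show ?thesis
    using has_derivative_unique[OF d] by blast
qed

lemma C2_components_derivatives:
  fixes f :: "real^2 \<Rightarrow> real^2"
  assumes "\<forall>j. C2 (\<lambda>x. f x $ j)"
  obtains Df D2 where "\<And>x. (f has_derivative blinfun_apply (Df x)) (at x)"
    "\<And>x. (Df has_derivative blinfun_apply (D2 x)) (at x)" "continuous_on UNIV D2"
proof -
  obtain Dc D2c where dc: "\<And>j x. ((\<lambda>x. f x $ j) has_derivative blinfun_apply (Dc j x)) (at x)"
    and d2c: "\<And>j x. (Dc j has_derivative blinfun_apply (D2c j x)) (at x)"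
    and c2c: "\<And>j. continuous_on UNIV (D2c j)"
    using assms unfolding C2_def by metis
  define L where "L j = blinfun_scaleR_left (axis j (1::real) :: real^2)" for j
  define M where "M j = Blinfun (\<lambda>B. L j o\<^sub>L (B :: (real^2) \<Rightarrow>\<^sub>L real))" for j
  have M: "blinfun_apply (M j) = (\<lambda>B. L j o\<^sub>L B)" for j
    unfolding M_def
    by (rule bounded_linear_Blinfun_apply[OF bounded_bilinear.bounded_linear_right[OF bounded_bilinear_blinfun_compose]])
  show ?thesis
  proof
    fix x
    have "((\<lambda>x. f x $ 1 *\<^sub>R axis 1 1 + f x $ 2 *\<^sub>R axis 2 1) has_derivative
        (\<lambda>h. Dc 1 x h *\<^sub>R axis 1 1 + Dc 2 x h *\<^sub>R (axis 2 1 :: real^2))) (at x)"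
      by (intro has_derivative_add bounded_linear.has_derivative[OF bounded_linear_scaleR_left] dc)
    moreover have "blinfun_apply ((L 1 o\<^sub>L Dc 1 x) + (L 2 o\<^sub>L Dc 2 x)) =
        (\<lambda>h. Dc 1 x h *\<^sub>R axis 1 1 + Dc 2 x h *\<^sub>R axis 2 1)"
      by (rule ext) (simp add: L_def blinfun.add_left)
    ultimately show "(f has_derivative blinfun_apply ((L 1 o\<^sub>L Dc 1 x) + (L 2 o\<^sub>L Dc 2 x))) (at x)"
      by (simp flip: vec2_eq_axis_sum)
    have "((\<lambda>x. M 1 (Dc 1 x) + M 2 (Dc 2 x)) has_derivative (\<lambda>h. M 1 (D2c 1 x h) + M 2 (D2c 2 x h))) (at x)"
      by (intro has_derivative_add bounded_linear.has_derivative[OF blinfun.bounded_linear_right] d2c)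
    moreover have "blinfun_apply ((M 1 o\<^sub>L D2c 1 x) + (M 2 o\<^sub>L D2c 2 x)) =
        (\<lambda>h. M 1 (D2c 1 x h) + M 2 (D2c 2 x h))"
      by (rule ext) (simp add: blinfun.add_left)
    ultimately show "((\<lambda>x. (L 1 o\<^sub>L Dc 1 x) + (L 2 o\<^sub>L Dc 2 x)) has_derivative
        blinfun_apply ((M 1 o\<^sub>L D2c 1 x) + (M 2 o\<^sub>L D2c 2 x))) (at x)"
      by (simp add: M)
  next
    show "continuous_on UNIV (\<lambda>x. (M 1 o\<^sub>L D2c 1 x) + (M 2 o\<^sub>L D2c 2 x))"
      using c2c[of 1] c2c[of 2] by (intro continuous_intros)
  qed
qed

lemma C2c_field_imp_C2_supported:
  assumes f: "C2c_field (ball 0 r) f" and r: "0 < r"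
  obtains Df D2 where "C2_supported f Df D2 r"
proof -
  obtain Df D2 where fD: "\<And>x. (f has_derivative blinfun_apply (Df x)) (at x)"
    and DD: "\<And>x. (Df has_derivative blinfun_apply (D2 x)) (at x)" and D2c: "continuous_on UNIV D2"
    using f unfolding C2c_field_def by (metis C2_components_derivatives)
  define U where "U = - closure {x. f x \<noteq> 0}"
  have U: "open U"
    by (simp add: U_def open_Compl)
  have fU: "f y = 0" if "y \<in> U" for y
    using that closure_subset[of "{x. f x \<noteq> 0}"] by (auto simp: U_def)
  have DfU: "Df y = 0" if "y \<in> U" for y
    using has_derivative_zero_on_open[OF U that fU fD] by (intro blinfun_eqI) simp
  have D2U: "D2 y = 0" if "y \<in> U" for y
    using has_derivative_zero_on_open[OF U that DfU DD] by (intro blinfun_eqI) simp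
  have "x \<in> U" if "r \<le> norm x" for x
    using f that by (auto simp: U_def C2c_field_def)
  then have "C2_supported f Df D2 r"
    using r fD DD D2c fU DfU D2U by unfold_locales auto
  then show ?thesis
    by (rule that)
qed

context
  fixes f :: "real^2 \<Rightarrow> real^2" and r :: real and m :: nat and c :: "nat \<Rightarrow> real"
    and gam :: "nat \<Rightarrow> real^2" and \<psi> :: "real^2"
  assumes f: "continuous_supported f r"
    and unit: "\<forall>i<m. norm (gam i) = 1"
    and \<psi>: "norm \<psi> = 1" "\<forall>i<m. \<psi> \<bullet> gam i \<noteq> 0"
begin

interpretation continuous_supported f r
  by (rule f)

lemma radon_star_transform:
  "radon (star_transform m c gam f) \<psi> u = (\<Sum>i<m. c i *\<^sub>R vector
     [radon (divbeam (gam i) (\<lambda>y. f y \<bullet> gam i)) \<psi> u, radon (divbeam (gam i) (\<lambda>y. f y \<bullet> perp (gam i))) \<psi> u])"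
proof -
  have "((\<lambda>t. star_transform m c gam f (u *\<^sub>R \<psi> + t *\<^sub>R perp \<psi>)) has_integral (\<Sum>i<m. c i *\<^sub>R vector
     [radon (divbeam (gam i) (\<lambda>y. f y \<bullet> gam i)) \<psi> u, radon (divbeam (gam i) (\<lambda>y. f y \<bullet> perp (gam i))) \<psi> u])) UNIV"
    unfolding star_transform_def
    using unit \<psi> continuous_supported_inner
    by (intro has_integral_sum has_integral_cmul vector2_has_integral has_integral_radon_divbeam) auto
  then show ?thesis
    by (simp add: radon_def integral_unique)
qed

lemma radon_star_transform_has_derivative:
  "(radon (star_transform m c gam f) \<psi> has_vector_derivative
     (vector [gamma_psi m c gam \<psi>, perp (gamma_psi m c gam \<psi>)] :: real^2^2) *v radon f \<psi> s) (at s)"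
proof -
  define v where "v = radon f \<psi> s"
  have "((\<lambda>u. \<Sum>i<m. c i *\<^sub>R (vector [radon (divbeam (gam i) (\<lambda>y. f y \<bullet> gam i)) \<psi> u,
        radon (divbeam (gam i) (\<lambda>y. f y \<bullet> perp (gam i))) \<psi> u] :: real^2)) has_vector_derivative
      (\<Sum>i<m. c i *\<^sub>R vector [- radon (\<lambda>y. f y \<bullet> gam i) \<psi> s / (\<psi> \<bullet> gam i),
        - radon (\<lambda>y. f y \<bullet> perp (gam i)) \<psi> s / (\<psi> \<bullet> gam i)])) (at s)"
  proof (rule has_vector_derivative_sum, rule bounded_linear.has_vector_derivative[OF bounded_linear_scaleR_right])
    fix i assume "i \<in> {..<m}"
    then have i: "norm (gam i) = 1" "\<psi> \<bullet> gam i \<noteq> 0"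
      using unit \<psi> by auto
    show "((\<lambda>u. vector [radon (divbeam (gam i) (\<lambda>y. f y \<bullet> gam i)) \<psi> u,
        radon (divbeam (gam i) (\<lambda>y. f y \<bullet> perp (gam i))) \<psi> u] :: real^2) has_vector_derivative
      vector [- radon (\<lambda>y. f y \<bullet> gam i) \<psi> s / (\<psi> \<bullet> gam i),
        - radon (\<lambda>y. f y \<bullet> perp (gam i)) \<psi> s / (\<psi> \<bullet> gam i)]) (at s)"
      using radon_divbeam_has_derivative[OF continuous_supported_inner i(1) \<psi>(1) i(2)]
      by (intro vector2_has_vector_derivative)
  qed
  moreover have "(\<Sum>i<m. c i *\<^sub>R vector [- radon (\<lambda>y. f y \<bullet> gam i) \<psi> s / (\<psi> \<bullet> gam i),
        - radon (\<lambda>y. f y \<bullet> perp (gam i)) \<psi> s / (\<psi> \<bullet> gam i)])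
      = (vector [gamma_psi m c gam \<psi>, perp (gamma_psi m c gam \<psi>)] :: real^2^2) *v v"
  proof -
    have "gamma_psi m c gam \<psi> \<bullet> v = - (\<Sum>i<m. (c i / (\<psi> \<bullet> gam i)) * (gam i \<bullet> v))"
      "perp (gamma_psi m c gam \<psi>) \<bullet> v = - (\<Sum>i<m. (c i / (\<psi> \<bullet> gam i)) * (perp (gam i) \<bullet> v))"
      by (simp_all add: gamma_psi_def perp_minus perp_sum perp_scaleR inner_sum_left)
    then show ?thesis
      unfolding matrix_rows_perp_mult_vector
      by (simp add: radon_inner[OF \<psi>(1)] v_def[symmetric] vec2_eq_iff inner_commute sum_negf[symmetric])
  qed
  ultimately show ?thesis
    by (simp add: radon_star_transform[abs_def] v_def)
qed

end

lemma radon_star_transform_derivative: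
  fixes f :: "real^2 \<Rightarrow> real^2"
  assumes f: "continuous_supported f r" and unit: "\<forall>i<m. norm (gam i) = 1"
    and \<psi>: "\<psi> \<in> sphere 0 1 - (Z1 m gam \<union> Z2 m c gam)"
  shows "(radon (star_transform m c gam f) \<psi> has_vector_derivative
      vector_derivative (radon (star_transform m c gam f) \<psi>) (at s)) (at s)"
    and "radon f \<psi> s = Qmat m c gam \<psi> *v vector_derivative (radon (star_transform m c gam f) \<psi>) (at s)"
proof -
  have "norm \<psi> = 1" "\<forall>i<m. \<psi> \<bullet> gam i \<noteq> 0"
    using \<psi> by (auto simp: Z1_def)
  note d = radon_star_transform_has_derivative[OF f unit this, of c s]
  note vd = vector_derivative_at[OF d]
  show "(radon (star_transform m c gam f) \<psi> has_vector_derivative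
      vector_derivative (radon (star_transform m c gam f) \<psi>) (at s)) (at s)"
    unfolding vd by (rule d)
  have "gamma_psi m c gam \<psi> \<noteq> 0"
    using \<psi> by (auto simp: Z2_def)
  then show "radon f \<psi> s = Qmat m c gam \<psi> *v vector_derivative (radon (star_transform m c gam f) \<psi>) (at s)"
    unfolding vd Qmat_def by (simp add: matrix_inv_mult_vector_cancel invertible_matrix_rows_perp)
qed

lemma radon_eq_if_star_transform_eq:
  fixes f g :: "real^2 \<Rightarrow> real^2"
  assumes f: "continuous_supported f r" and g: "continuous_supported g r'"
    and unit: "\<forall>i<m. norm (gam i) = 1" and fin: "finite (Z1 m gam \<union> Z2 m c gam)"
    and eq: "star_transform m c gam g = star_transform m c gam f" and \<psi>: "\<psi> \<in> sphere 0 1"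
  shows "radon g \<psi> = radon f \<psi>"
proof
  fix s
  show "radon g \<psi> s = radon f \<psi> s"
  proof (rule continuous_on_sphere_eq_off_finite[OF _ _ fin _ _ _ \<psi>])
    show "continuous_on (sphere 0 1) (\<lambda>\<psi>. radon g \<psi> s)" "continuous_on (sphere 0 1) (\<lambda>\<psi>. radon f \<psi> s)"
      using continuous_supported.continuous_on_radon_sphere f g by blast+
    show "radon g \<psi>' s = radon f \<psi>' s" if "\<psi>' \<in> sphere 0 1 - (Z1 m gam \<union> Z2 m c gam)" for \<psi>'
      using radon_star_transform_derivative(2)[OF f unit that] radon_star_transform_derivative(2)[OF g unit that]
      by (simp add: eq)
  qed auto
qed

lemma radon_inverse_cong:
  assumes "\<And>\<theta>. G (polar_dir \<theta>) = H (polar_dir \<theta>)"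
  shows "radon_inverse G = radon_inverse H"
  using assms by (simp add: radon_inverse_def[abs_def] polar_dir_def[symmetric])

theorem corollary1:
  fixes r :: real and m :: nat and c :: "nat \<Rightarrow> real" and gam :: "nat \<Rightarrow> real^2"
    and f :: "real^2 \<Rightarrow> real^2"
  assumes r: "r > 0"
    and unit: "\<forall>i<m. norm (gam i) = 1"
    and dist: "inj_on gam {..<m}"
    and cnz: "\<forall>i<m. c i \<noteq> 0"
    and fin: "finite (Z1 m gam \<union> Z2 m c gam)"
    and f: "C2c_field (ball 0 r) f"
  shows "(\<exists>F :: real^2 \<Rightarrow> real \<Rightarrow> real^2.
           continuous_on (sphere 0 1 \<times> UNIV) (\<lambda>(psi, s). F psi s) \<and>
           (\<forall>psi \<in> sphere 0 1 - (Z1 m gam \<union> Z2 m c gam). \<forall>s.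
              ((\<lambda>u. radon (star_transform m c gam f) psi u)
                 has_vector_derivative
                 vector_derivative (\<lambda>u. radon (star_transform m c gam f) psi u) (at s)) (at s) \<and>
              F psi s = Qmat m c gam psi *v
                 vector_derivative (\<lambda>u. radon (star_transform m c gam f) psi u) (at s)) \<and>
           (\<forall>psi \<in> sphere 0 1. \<forall>s. F psi s = radon f psi s) \<and>
           (\<forall>x \<in> ball 0 r. f x = radon_inverse F x)) \<and>
         (\<forall>g. C2c_field (ball 0 r) g \<and> star_transform m c gam g = star_transform m c gam f
           \<longrightarrow> g = f)"
proof -
  \<comment> \<open>\<open>dist\<close> and \<open>cnz\<close> are not used: of the branches, only their unit length and the
    finiteness of \<open>Z1 \<union> Z2\<close> enter the argument.\<close>
  obtain Df D2 where "C2_supported f Df D2 r"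
    using C2c_field_imp_C2_supported[OF f r] .
  then interpret C2_supported f Df D2 r .
  have "g = f" if g: "C2c_field (ball 0 r) g" and eq: "star_transform m c gam g = star_transform m c gam f" for g
  proof -
    obtain Dg D2g where "C2_supported g Dg D2g r"
      using C2c_field_imp_C2_supported[OF g r] .
    then interpret g: C2_supported g Dg D2g r .
    have "radon g (polar_dir \<theta>) = radon f (polar_dir \<theta>)" for \<theta>
      using radon_eq_if_star_transform_eq[OF continuous_supported_axioms g.continuous_supported_axioms unit fin eq]
      by simp
    then have "radon_inverse (radon g) = radon_inverse (radon f)"
      by (rule radon_inverse_cong)
    then show "g = f"
      by (simp add: radon_inverse_radon g.radon_inverse_radon)
  qed
  then show ?thesis
    using radon_continuous radon_star_transform_derivative[OF continuous_supported_axioms unit] radon_inverse_radon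
    by (intro conjI exI[of _ "radon f"]) auto
qed

end
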